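(* Let $m,\gamma,\sigma>0$, let $W$ be a standard one-dimensional Wiener process, and let $V_t$ solve $m\,dV_t=-\gamma V_t\,dt+\sigma\,dW_t$ with deterministic initial condition $V_0=v$, and set $K_t=\tfrac12 m V_t^2$. If the initial kinetic energy $K_0=\tfrac12 m v^2$ is positive, then $\mathbb{E}[\inf\{t>0:K_t=0\}]<\infty$; in particular $K_t$ becomes zero in finite time almost surely. *)

theory Defs
  imports "HOL-Probability.Probability"
begin

definition wiener_process :: "'a measure \<Rightarrow> (real \<Rightarrow> 'a \<Rightarrow> real) \<Rightarrow> bool" where
  "wiener_process M W \<longleftrightarrow>
     prob_space M \<and>
     (\<forall>t\<ge>0. W t \<in> borel_measurable M) \<and>
     (\<forall>\<omega>\<in>space M. W 0 \<omega> = 0) \<and>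
     (\<forall>\<omega>\<in>space M. continuous_on {0..} (\<lambda>t. W t \<omega>)) \<and>
     (\<forall>s t. 0 \<le> s \<and> s < t \<longrightarrow>
        distributed M lborel (\<lambda>\<omega>. W t \<omega> - W s \<omega>) (normal_density 0 (sqrt (t - s)))) \<and>
     (\<forall>ts :: real list. sorted_wrt (<) ts \<and> (\<forall>t\<in>set ts. 0 \<le> t) \<longrightarrow>
        prob_space.indep_vars M (\<lambda>_. borel) (\<lambda>i \<omega>. W (ts ! Suc i) \<omega> - W (ts ! i) \<omega>)
          {..<length ts - 1})"

text \<open>Pathwise (strong) solution of the additive-noise SDE  m dV = -\<gamma> V dt + \<sigma> dW,
V 0 = v, written in integral form  m V t = m v - \<gamma> \<integral>_0^t V s ds + \<sigma> W t
(no stochastic integral is needed because the noise is additive), with continuous paths.\<close>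

definition langevin_solution ::
  "'a measure \<Rightarrow> real \<Rightarrow> real \<Rightarrow> real \<Rightarrow> real \<Rightarrow> (real \<Rightarrow> 'a \<Rightarrow> real) \<Rightarrow> (real \<Rightarrow> 'a \<Rightarrow> real) \<Rightarrow> bool"
  where
  "langevin_solution M m \<gamma> \<sigma> v W V \<longleftrightarrow>
     (\<forall>\<omega>\<in>space M. continuous_on {0..} (\<lambda>t. V t \<omega>) \<and>
        (\<forall>t\<ge>0. m * V t \<omega> = m * v - \<gamma> * integral {0..t} (\<lambda>s. V s \<omega>) + \<sigma> * W t \<omega>))"

text \<open>First time after 0 at which a process K vanishes, valued in [0,\<infinity>]
(the infimum of the empty set is \<infinity>).\<close>

definition first_zero_time :: "(real \<Rightarrow> 'a \<Rightarrow> real) \<Rightarrow> 'a \<Rightarrow> ennreal" where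
  "first_zero_time K \<omega> = Inf (ennreal ` {t. t > 0 \<and> K t \<omega> = 0})"

end

theory Submission
  imports Defs
begin

text \<open>With \<open>c = \<gamma>/m\<close>, \<open>s = \<sigma>/m\<close> and \<open>e = sgn v\<close>, the process \<open>u = e V\<close> solves
\<open>u t = \<bar>v\<bar> - c \<integral>\<^sub>0\<^sup>t u + x t\<close> with \<open>x = e s W\<close>. While \<open>u\<close> stays positive the integral term
pushes it down, and over a block of length \<open>h = 11/c\<close> this gives
\<open>u((k+1)h) \<le> u(kh)/12 + G\<^sub>k + 1\<close>, where \<open>G\<^sub>k\<close> is a weighted sum of Wiener increments of the
\<open>k\<close>-th block (a left Riemann sum with \<open>n\<close> points; the \<open>+1\<close> absorbs the discretisation
error for all large \<open>n\<close>). The \<open>G\<^sub>k\<close> are independent centred Gaussians with standard deviation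
between \<open>s\<surd>h/\<surd>3\<close> and \<open>s\<surd>h\<close>. If \<open>u\<close> survives up to time \<open>Nh\<close>, the recursion forces either
some \<open>G\<^sub>k > L - 1\<close> or all \<open>G\<^sub>k > -L/6 - 1\<close>; for \<open>L \<approx> \<bar>v\<bar> + s\<surd>(6h log N)\<close> both events have
probability \<open>O(1/N\<^sup>2)\<close>. Hence \<open>P(T > Nh) = O(1/N\<^sup>2)\<close> and \<open>E T \<le> h \<Sum>\<^sub>N P(T > Nh) < \<infinity>\<close>.\<close>

section \<open>Left Riemann sums\<close>

lemma integral_uniform_partition:
  fixes g :: "real \<Rightarrow> real"
  assumes d: "d > 0" and cont: "continuous_on {a..a + real k * d} g"
  shows "integral {a..a + real k * d} g = (\<Sum>i<k. integral {a + real i * d..a + real (Suc i) * d} g)"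
  using cont
proof (induction k)
  case 0
  then show ?case by simp
next
  case (Suc k)
  have sub: "{a..a + real k * d} \<subseteq> {a..a + real (Suc k) * d}" using d by auto
  have IH: "integral {a..a + real k * d} g = (\<Sum>i<k. integral {a + real i * d..a + real (Suc i) * d} g)"
    using Suc.IH Suc.prems continuous_on_subset[OF _ sub] by blast
  have "integral {a..a + real k * d} g + integral {a + real k * d..a + real (Suc k) * d} g
        = integral {a..a + real (Suc k) * d} g"
    by (rule Henstock_Kurzweil_Integration.integral_combine)
      (use d Suc.prems in \<open>simp_all add: integrable_continuous_real\<close>)
  then show ?case using IH by simp
qed

lemma integral_minus_left_endpoint_le:
  fixes g :: "real \<Rightarrow> real"
  assumes d: "d > 0" and cont: "continuous_on {p..p + d} g"
    and osc: "\<And>r. r \<in> {p..p+d} \<Longrightarrow> \<bar>g r - g p\<bar> \<le> \<eta>"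
  shows "\<bar>integral {p..p+d} g - d * g p\<bar> \<le> d * \<eta>"
proof -
  have int: "g integrable_on {p..p+d}" using cont by (rule integrable_continuous_real)
  have "integral {p..p+d} g \<le> integral {p..p+d} (\<lambda>r. g p + \<eta>)"
    by (rule integral_le[OF int]) (use osc in \<open>force simp: abs_le_iff\<close>)+
  moreover have "integral {p..p+d} (\<lambda>r. g p - \<eta>) \<le> integral {p..p+d} g"
    by (rule integral_le[OF _ int]) (use osc in \<open>force simp: abs_le_iff\<close>)+
  ultimately show ?thesis using d by (auto simp: abs_le_iff algebra_simps)
qed

lemma left_Riemann_sum_error_le:
  fixes g :: "real \<Rightarrow> real"
  assumes d: "d > 0" and cont: "continuous_on {a..a + real k * d} g"
    and osc: "\<And>i r. i < k \<Longrightarrow> r \<in> {a + real i * d..a + real (Suc i) * d} \<Longrightarrow>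
                \<bar>g r - g (a + real i * d)\<bar> \<le> \<eta>"
  shows "\<bar>integral {a..a + real k * d} g - d * (\<Sum>i<k. g (a + real i * d))\<bar> \<le> real k * d * \<eta>"
proof -
  have "\<bar>integral {a..a + real k * d} g - d * (\<Sum>i<k. g (a + real i * d))\<bar>
      = \<bar>\<Sum>i<k. (integral {a + real i * d..a + real (Suc i) * d} g - d * g (a + real i * d))\<bar>"
    by (simp add: integral_uniform_partition[OF d cont] sum_subtractf sum_distrib_left)
  also have "\<dots> \<le> (\<Sum>i<k. \<bar>integral {a + real i * d..a + real (Suc i) * d} g - d * g (a + real i * d)\<bar>)"
    by (rule sum_abs)
  also have "\<dots> \<le> (\<Sum>i<k. d * \<eta>)"
  proof (rule sum_mono)
    fix i assume i: "i \<in> {..<k}"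
    have eq: "a + real (Suc i) * d = (a + real i * d) + d" by (simp add: algebra_simps)
    have le: "real (Suc i) * d \<le> real k * d" using i d by (intro mult_right_mono) auto
    have ge: "0 \<le> real i * d" using d by simp
    have sub: "{a + real i * d..a + real i * d + d} \<subseteq> {a..a + real k * d}"
      using le ge by (auto simp: algebra_simps)
    show "\<bar>integral {a + real i * d..a + real (Suc i) * d} g - d * g (a + real i * d)\<bar> \<le> d * \<eta>"
      unfolding eq
      by (rule integral_minus_left_endpoint_le[OF d continuous_on_subset[OF cont sub]])
        (use osc i eq in auto)
  qed
  finally show ?thesis by simp
qed

lemma left_Riemann_sum_tendsto:
  fixes g :: "real \<Rightarrow> real"
  assumes t: "t > 0" and cont: "continuous_on {0..t} g"
  shows "(\<lambda>n. t / real (Suc n) * (\<Sum>i<Suc n. g (real i * (t / real (Suc n)))))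
           \<longlonglongrightarrow> integral {0..t} g"
proof (rule LIMSEQ_I)
  fix r :: real assume r: "r > 0"
  have uc: "uniformly_continuous_on {0..t} g"
    using compact_uniformly_continuous[OF cont] by simp
  obtain \<delta> where \<delta>: "\<delta> > 0" and \<delta>g: "\<And>x x'. x \<in> {0..t} \<Longrightarrow> x' \<in> {0..t} \<Longrightarrow>
      dist x' x < \<delta> \<Longrightarrow> dist (g x') (g x) < r / (2*t)"
    using uc[unfolded uniformly_continuous_on_def, rule_format, of "r/(2*t)"] r t by auto
  obtain n0 :: nat where n0: "t / \<delta> < real n0" using reals_Archimedean2 by blast
  show "\<exists>n0. \<forall>n\<ge>n0. norm (t / real (Suc n) * (\<Sum>i<Suc n. g (real i * (t / real (Suc n))))
                           - integral {0..t} g) < r"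
  proof (intro exI allI impI)
    fix n assume n: "n \<ge> n0"
    define d where "d = t / real (Suc n)"
    have d: "d > 0" using t by (simp add: d_def)
    have kd: "0 + real (Suc n) * d = t" by (simp add: d_def)
    have "t / \<delta> < real (Suc n)" using n0 n by linarith
    then have d\<delta>: "d < \<delta>" using t \<delta> by (simp add: d_def field_simps)
    have cont': "continuous_on {0..0 + real (Suc n) * d} g" using cont kd by simp
    have "\<bar>integral {0..0 + real (Suc n) * d} g - d * (\<Sum>i<Suc n. g (0 + real i * d))\<bar>
        \<le> real (Suc n) * d * (r / (2*t))"
    proof (rule left_Riemann_sum_error_le[OF d cont'])
      fix i x assume i: "i < Suc n" and x: "x \<in> {0 + real i * d..0 + real (Suc i) * d}"
      have le: "real (Suc i) * d \<le> real (Suc n) * d" using i d by (intro mult_right_mono) auto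
      have ge: "0 \<le> real i * d" using d by simp
      have xin: "x \<in> {0..t}" "real i * d \<in> {0..t}" using x d kd le
        by (auto simp del: of_nat_Suc) (use ge in linarith)
      have "dist x (real i * d) < \<delta>" using x d\<delta> by (auto simp: dist_real_def algebra_simps)
      then show "\<bar>g x - g (0 + real i * d)\<bar> \<le> r / (2*t)"
        using \<delta>g[OF xin(2) xin(1)] by (simp add: dist_real_def)
    qed
    also have "real (Suc n) * d * (r / (2*t)) = r/2" using t by (simp add: d_def)
    finally have "\<bar>integral {0..0 + real (Suc n) * d} g - d * (\<Sum>i<Suc n. g (0 + real i * d))\<bar> \<le> r/2" .
    then have "\<bar>integral {0..t} g - d * (\<Sum>i<Suc n. g (real i * d))\<bar> \<le> r/2"
      using kd by simp
    then show "norm (t / real (Suc n) * (\<Sum>i<Suc n. g (real i * (t / real (Suc n))))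
                - integral {0..t} g) < r"
      unfolding d_def[symmetric] using r by (simp add: abs_minus_commute)
  qed
qed

lemma borel_measurable_path_integral:
  fixes f :: "real \<Rightarrow> 'a \<Rightarrow> real"
  assumes meas: "\<And>r. r \<in> {0..t} \<Longrightarrow> f r \<in> borel_measurable M"
    and cont: "\<And>\<omega>. \<omega> \<in> space M \<Longrightarrow> continuous_on {0..t} (\<lambda>r. f r \<omega>)"
  shows "(\<lambda>\<omega>. integral {0..t} (\<lambda>r. f r \<omega>)) \<in> borel_measurable M"
proof (cases "t > 0")
  case False
  then have "(\<lambda>\<omega>. integral {0..t} (\<lambda>r. f r \<omega>)) = (\<lambda>\<omega>. 0)"
    by (cases "t = 0") (simp_all add: not_less)
  then show ?thesis by simp
next
  case t: True
  show ?thesis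
  proof (rule borel_measurable_LIMSEQ_real)
    fix \<omega> assume "\<omega> \<in> space M"
    then show "(\<lambda>n. t / real (Suc n) * (\<Sum>i<Suc n. f (real i * (t / real (Suc n))) \<omega>))
                 \<longlonglongrightarrow> integral {0..t} (\<lambda>r. f r \<omega>)"
      using left_Riemann_sum_tendsto[OF t cont] by simp
  next
    fix n
    have "real i * (t / real (Suc n)) \<in> {0..t}" if "i < Suc n" for i
    proof -
      have "t * real i \<le> t * real (Suc n)" using that t by (intro mult_left_mono) auto
      then show ?thesis using t by (auto simp: field_simps)
    qed
    then show "(\<lambda>\<omega>. t / real (Suc n) * (\<Sum>i<Suc n. f (real i * (t / real (Suc n))) \<omega>))
                 \<in> borel_measurable M"
      by (intro borel_measurable_times borel_measurable_const borel_measurable_sum meas) auto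
  qed
qed

section \<open>The linear integral equation\<close>

lemma linear_integral_equation_explicit:
  fixes u w :: "real \<Rightarrow> real"
  assumes c: "c > 0" and cu: "continuous_on {0..} u" and cw: "continuous_on {0..} w"
    and eq: "\<And>t. t \<ge> 0 \<Longrightarrow> u t = v - c * integral {0..t} u + w t"
    and t: "t \<ge> 0"
  shows "u t = w t + exp (- c * t) * (v - c * integral {0..t} (\<lambda>r. exp (c * r) * w r))"
proof -
  define F where "F \<tau> = exp (c*\<tau>) * (v - c * integral {0..\<tau>} u) + c * integral {0..\<tau>} (\<lambda>r. exp (c*r) * w r)" for \<tau>
  have cut: "continuous_on {0..t} u" using continuous_on_subset[OF cu] by auto
  have cwt: "continuous_on {0..t} (\<lambda>r. exp (c*r) * w r)"
    using continuous_on_subset[OF cw] by (auto intro!: continuous_intros)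
  have "(F has_field_derivative 0) (at \<tau> within {0..t})" if \<tau>: "\<tau> \<in> {0..t}" for \<tau>
  proof -
    have d1: "((\<lambda>\<tau>. integral {0..\<tau>} u) has_field_derivative u \<tau>) (at \<tau> within {0..t})"
      using integral_has_vector_derivative[OF cut \<tau>] by (simp only: add: has_real_derivative_iff_has_vector_derivative)
    have d2: "((\<lambda>\<tau>. integral {0..\<tau>} (\<lambda>r. exp (c*r) * w r)) has_field_derivative exp (c*\<tau>) * w \<tau>) (at \<tau> within {0..t})"
      using integral_has_vector_derivative[OF cwt \<tau>] by (simp only: add: has_real_derivative_iff_has_vector_derivative)
    have "(F has_field_derivative (exp (c*\<tau>) * c * (v - c * integral {0..\<tau>} u) + exp (c*\<tau>) * (- (c * u \<tau>)) + c * (exp (c*\<tau>) * w \<tau>))) (at \<tau> within {0..t})"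
      unfolding F_def
      by (intro DERIV_add DERIV_mult DERIV_diff DERIV_cmult d1 d2 DERIV_const)
         (auto intro!: derivative_eq_intros d1 d2 simp del: exp_times_arg_commute)
    moreover have "exp (c*\<tau>) * c * (v - c * integral {0..\<tau>} u) + exp (c*\<tau>) * (- (c * u \<tau>)) + c * (exp (c*\<tau>) * w \<tau>) = 0"
    proof -
      have e: "v + w \<tau> - (u \<tau> + c * integral {0..\<tau>} u) = 0" using eq[of \<tau>] \<tau> by simp
      have "exp (c*\<tau>) * c * (v - c * integral {0..\<tau>} u) + exp (c*\<tau>) * (- (c * u \<tau>)) + c * (exp (c*\<tau>) * w \<tau>)
          = c * exp (c*\<tau>) * (v + w \<tau> - (u \<tau> + c * integral {0..\<tau>} u))"
        by (simp add: algebra_simps)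
      then show ?thesis using e by simp
    qed
    ultimately show ?thesis by simp
  qed
  then obtain k where k: "\<And>\<tau>. \<tau> \<in> {0..t} \<Longrightarrow> F \<tau> = k"
    using has_field_derivative_zero_constant[of "{0..t}" F] by auto
  have "F t = F 0" using k t by auto
  then have "exp (c*t) * (v - c * integral {0..t} u) = v - c * integral {0..t} (\<lambda>r. exp (c*r) * w r)"
    by (simp add: F_def algebra_simps)
  then have "v - c * integral {0..t} u = exp (- c * t) * (v - c * integral {0..t} (\<lambda>r. exp (c*r) * w r))"
    by (metis (no_types, lifting) exp_minus_inverse mult.assoc mult.left_neutral mult_minus_left)
  then show ?thesis using eq[OF t] by simp
qed

lemma integral_equation_increment:
  fixes u x :: "real \<Rightarrow> real"
  assumes cu: "continuous_on {0..b} u"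
    and eq: "\<And>t. t \<in> {0..b} \<Longrightarrow> u t = v - c * integral {0..t} u + x t"
    and r: "0 \<le> r" "r \<le> b"
  shows "u b - x b = u r - x r - c * integral {r..b} u"
proof -
  have "integral {0..r} u + integral {r..b} u = integral {0..b} u"
    by (rule Henstock_Kurzweil_Integration.integral_combine) (use r integrable_continuous_real[OF cu] in auto)
  then have "c * integral {0..b} u = c * integral {0..r} u + c * integral {r..b} u"
    by (metis distrib_left)
  then show ?thesis using eq[of r] eq[of b] r by simp
qed

text \<open>Since \<open>u \<ge> 0\<close> on the block, \<open>u - x\<close> decreases there, so \<open>u r \<ge> u(S+h) - x(S+h) + x r\<close>;
integrating this over the block and inserting it into the equation gives the bound.\<close>

lemma positive_solution_step_le:
  fixes u x :: "real \<Rightarrow> real"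
  assumes c: "c > 0" and h: "h > 0" and S: "S \<ge> 0"
    and cu: "continuous_on {0..S+h} u" and cx: "continuous_on {0..S+h} x"
    and eq: "\<And>t. t \<in> {0..S+h} \<Longrightarrow> u t = v - c * integral {0..t} u + x t"
    and pos: "\<And>r. r \<in> {S..S+h} \<Longrightarrow> u r \<ge> 0"
  shows "u (S+h) \<le> u S / (1+c*h) + (x (S+h) - x S) - c / (1+c*h) * integral {S..S+h} (\<lambda>r. x r - x S)"
proof -
  define I where "I = integral {S..S+h} u"
  define J where "J = integral {S..S+h} (\<lambda>r. x r - x S)"
  have cu': "continuous_on {r..S+h} u" and cx': "continuous_on {r..S+h} x" if "r \<ge> 0" for r
    using that by (auto intro: continuous_on_subset[OF cu] continuous_on_subset[OF cx])
  have below: "u (S+h) - x (S+h) + x r \<le> u r" if r: "r \<in> {S..S+h}" for r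
  proof -
    have "integral {r..S+h} u \<ge> 0"
      using r S pos by (intro integral_nonneg integrable_continuous_real cu') auto
    with c have "c * integral {r..S+h} u \<ge> 0" by simp
    then show ?thesis using integral_equation_increment[OF cu eq, of r] r S by auto
  qed
  have "integral {S..S+h} (\<lambda>r. (u (S+h) - x (S+h) + x S) + (x r - x S)) \<le> I"
    unfolding I_def
  proof (rule integral_le)
    show "(\<lambda>r. (u (S+h) - x (S+h) + x S) + (x r - x S)) integrable_on {S..S+h}" "u integrable_on {S..S+h}"
      using S by (auto intro!: integrable_continuous_real continuous_intros cx' cu')
    show "(u (S+h) - x (S+h) + x S) + (x r - x S) \<le> u r" if "r \<in> {S..S+h}" for r
      using below[OF that] by simp
  qed
  also have "integral {S..S+h} (\<lambda>r. (u (S+h) - x (S+h) + x S) + (x r - x S))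
      = h * (u (S+h) - x (S+h) + x S) + J"
    using S h unfolding J_def
    by (subst integral_add) (auto intro!: integrable_continuous_real continuous_intros cx')
  finally have "c * (h * (u (S+h) - x (S+h) + x S) + J) \<le> c * I"
    using c by (intro mult_left_mono) auto
  moreover have "u (S+h) - x (S+h) = u S - x S - c * I"
    using integral_equation_increment[OF cu eq, of S] S h by (simp add: I_def)
  moreover have "c * (h * (u (S+h) - x (S+h) + x S) + J) = c*h * u (S+h) - c*h * x (S+h) + c*h * x S + c * J"
    "(1 + c*h) * u (S+h) = u (S+h) + c*h * u (S+h)"
    "(1 + c*h) * (x (S+h) - x S) = x (S+h) - x S + c*h * x (S+h) - c*h * x S"
    by (simp_all add: algebra_simps)
  ultimately have "(1 + c*h) * u (S+h) \<le> u S + (1 + c*h) * (x (S+h) - x S) - c * J"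
    by linarith
  moreover have pos: "1 + c*h > 0" using c h by (simp add: add_pos_pos)
  ultimately have "u (S+h) \<le> (u S + (1 + c*h) * (x (S+h) - x S) - c * J) / (1 + c*h)"
    by (simp add: pos_le_divide_eq mult.commute)
  also have "\<dots> = u S / (1+c*h) + (x (S+h) - x S) - c / (1+c*h) * J"
    using pos by (simp add: diff_divide_distrib add_divide_distrib)
  finally show ?thesis by (simp add: J_def)
qed

section \<open>The first zero time of a continuous process\<close>

lemma has_zero_iff_rational_approx:
  fixes f :: "real \<Rightarrow> real"
  assumes cont: "continuous_on {0..q} f" and f0: "f 0 \<noteq> 0"
  shows "(\<exists>t\<in>{0..q}. f t = 0) \<longleftrightarrow>
     (\<forall>n::nat. \<exists>p::rat. 0 \<le> real_of_rat p \<and> real_of_rat p \<le> q \<and> \<bar>f (real_of_rat p)\<bar> < 1 / real (Suc n))"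
proof
  assume "\<exists>t\<in>{0..q}. f t = 0"
  then obtain t0 where t0: "t0 \<in> {0..q}" "f t0 = 0" by blast
  have t0p: "t0 > 0" using t0 f0 by (cases "t0 = 0") auto
  show "\<forall>n::nat. \<exists>p::rat. 0 \<le> real_of_rat p \<and> real_of_rat p \<le> q \<and> \<bar>f (real_of_rat p)\<bar> < 1 / real (Suc n)"
  proof
    fix n :: nat
    obtain d where d: "d > 0" and dd: "\<And>x'. x' \<in> {0..q} \<Longrightarrow> dist x' t0 < d \<Longrightarrow> dist (f x') (f t0) < 1 / real (Suc n)"
      using cont[unfolded continuous_on_iff] t0(1) by (metis of_nat_0_less_iff zero_less_Suc divide_pos_pos zero_less_one)
    obtain r where r: "r \<in> \<rat>" "max 0 (t0 - d) < r" "r < t0"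
      using Rats_dense_in_real[of "max 0 (t0 - d)" t0] t0p d by auto
    obtain p where p: "r = real_of_rat p" using r(1) Rats_cases by blast
    have "r \<in> {0..q}" using r t0 by auto
    moreover have "dist r t0 < d" using r by (auto simp: dist_real_def)
    ultimately have "\<bar>f r\<bar> < 1 / real (Suc n)" using dd t0 by (auto simp: dist_real_def)
    then show "\<exists>p::rat. 0 \<le> real_of_rat p \<and> real_of_rat p \<le> q \<and> \<bar>f (real_of_rat p)\<bar> < 1 / real (Suc n)"
      using \<open>r \<in> {0..q}\<close> p by auto
  qed
next
  assume H: "\<forall>n::nat. \<exists>p::rat. 0 \<le> real_of_rat p \<and> real_of_rat p \<le> q \<and> \<bar>f (real_of_rat p)\<bar> < 1 / real (Suc n)"
  then obtain p0 :: rat where "0 \<le> real_of_rat p0" "real_of_rat p0 \<le> q" by blast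
  then have q: "q \<ge> 0" by linarith
  have cabs: "continuous_on {0..q} (\<lambda>t. \<bar>f t\<bar>)" using cont by (intro continuous_intros)
  obtain t0 where t0: "t0 \<in> {0..q}" and mn: "\<And>y. y \<in> {0..q} \<Longrightarrow> \<bar>f t0\<bar> \<le> \<bar>f y\<bar>"
    using continuous_attains_inf[OF compact_Icc _ cabs] q by auto
  have "f t0 = 0"
  proof (rule ccontr)
    assume "f t0 \<noteq> 0"
    then obtain n0 :: nat where n0: "n0 > 0" "inverse (real n0) < \<bar>f t0\<bar>"
      using ex_inverse_of_nat_less[of "\<bar>f t0\<bar>"] by auto
    define n where "n = n0 - 1"
    have "Suc n = n0" using n0 by (simp add: n_def)
    then have n: "inverse (real (Suc n)) < \<bar>f t0\<bar>" using n0 by simp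
    obtain p :: rat where "0 \<le> real_of_rat p" "real_of_rat p \<le> q" "\<bar>f (real_of_rat p)\<bar> < 1 / real (Suc n)"
      using H by blast
    then show False using mn[of "real_of_rat p"] n by (auto simp: inverse_eq_divide)
  qed
  then show "\<exists>t\<in>{0..q}. f t = 0" using t0 by blast
qed

lemma first_zero_time_less_iff:
  assumes f0: "f 0 \<omega> \<noteq> 0"
  shows "first_zero_time f \<omega> < y \<longleftrightarrow>
    (\<exists>q::rat. 0 \<le> real_of_rat q \<and> ennreal (real_of_rat q) < y \<and> (\<exists>t\<in>{0..real_of_rat q}. f t \<omega> = 0))"
proof
  assume "first_zero_time f \<omega> < y"
  then obtain t where t: "t > 0" "f t \<omega> = 0" "ennreal t < y"
    by (auto simp: first_zero_time_def Inf_less_iff)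
  have "\<exists>q::rat. t \<le> real_of_rat q \<and> ennreal (real_of_rat q) < y"
  proof (cases y)
    case (real r)
    then have "t < r" using t by (auto simp: ennreal_less_iff)
    then obtain x where x: "x \<in> \<rat>" "t < x" "x < r" using Rats_dense_in_real by blast
    then obtain q where "x = real_of_rat q" using Rats_cases by blast
    then show ?thesis using x t real by (intro exI[of _ q]) (auto intro!: ennreal_lessI)
  next
    case top
    obtain k :: nat where "t \<le> real k" using real_arch_simple by blast
    then show ?thesis using top by (intro exI[of _ "of_nat k"]) auto
  qed
  then obtain q :: rat where q: "t \<le> real_of_rat q" "ennreal (real_of_rat q) < y" by blast
  moreover have "0 \<le> real_of_rat q" using q t by linarith
  ultimately show "\<exists>q::rat. 0 \<le> real_of_rat q \<and> ennreal (real_of_rat q) < y \<and> (\<exists>t\<in>{0..real_of_rat q}. f t \<omega> = 0)"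
    using t by (intro exI[of _ q] conjI bexI[of _ t]) auto
next
  assume "\<exists>q::rat. 0 \<le> real_of_rat q \<and> ennreal (real_of_rat q) < y \<and> (\<exists>t\<in>{0..real_of_rat q}. f t \<omega> = 0)"
  then obtain q :: rat and t where q: "ennreal (real_of_rat q) < y"
    and t: "t \<in> {0..real_of_rat q}" "f t \<omega> = 0" by blast
  have "t \<noteq> 0" using f0 t by auto
  then have "t > 0" using t by simp
  have "ennreal t \<le> ennreal (real_of_rat q)" using t by (auto intro: ennreal_leI)
  then have "ennreal t < y" using q by (rule le_less_trans)
  then show "first_zero_time f \<omega> < y"
    using \<open>t > 0\<close> t by (auto simp: first_zero_time_def Inf_less_iff)
qed
lemma borel_measurable_first_zero_time:
  fixes f :: "real \<Rightarrow> 'a \<Rightarrow> real"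
  assumes meas: "\<And>t. t \<ge> 0 \<Longrightarrow> f t \<in> borel_measurable M"
    and cont: "\<And>\<omega>. \<omega> \<in> space M \<Longrightarrow> continuous_on {0..} (\<lambda>t. f t \<omega>)"
    and f0: "\<And>\<omega>. \<omega> \<in> space M \<Longrightarrow> f 0 \<omega> \<noteq> 0"
  shows "first_zero_time f \<in> borel_measurable M"
proof (rule borel_measurableI_less)
  fix y :: ennreal
  define g where "g p \<omega> = f (max 0 (real_of_rat p)) \<omega>" for p \<omega>
  have gm[measurable]: "g p \<in> borel_measurable M" for p unfolding g_def by (rule meas) simp
  define S where "S q = {\<omega>\<in>space M. \<forall>n::nat. \<exists>p::rat. 0 \<le> real_of_rat p \<and> real_of_rat p \<le> q \<and>
                           \<bar>g p \<omega>\<bar> < 1 / real (Suc n)}" for q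
  have Sm: "S q \<in> sets M" for q unfolding S_def by measurable
  have Seq: "\<omega> \<in> S q \<longleftrightarrow> \<omega> \<in> space M \<and> (\<exists>t\<in>{0..q}. f t \<omega> = 0)" if q: "q \<ge> 0" for q \<omega>
  proof (cases "\<omega> \<in> space M")
    case True
    have c: "continuous_on {0..q} (\<lambda>t. f t \<omega>)" using continuous_on_subset[OF cont[OF True]] by auto
    show ?thesis using has_zero_iff_rational_approx[OF c f0[OF True]] True unfolding S_def g_def
      by (auto simp: max_def)
  qed (auto simp: S_def)
  have "{\<omega>\<in>space M. first_zero_time f \<omega> < y}
      = (\<Union>q\<in>{q::rat. 0 \<le> real_of_rat q \<and> ennreal (real_of_rat q) < y}. S (real_of_rat q))"
  proof (intro set_eqI iffI)
    fix \<omega> assume "\<omega> \<in> {\<omega>\<in>space M. first_zero_time f \<omega> < y}"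
    then have \<omega>: "\<omega> \<in> space M" and "first_zero_time f \<omega> < y" by auto
    then obtain q :: rat where "0 \<le> real_of_rat q" "ennreal (real_of_rat q) < y"
      and "\<exists>t\<in>{0..real_of_rat q}. f t \<omega> = 0"
      unfolding first_zero_time_less_iff[of f \<omega>, OF f0[OF \<omega>]] by blast
    then show "\<omega> \<in> (\<Union>q\<in>{q::rat. 0 \<le> real_of_rat q \<and> ennreal (real_of_rat q) < y}. S (real_of_rat q))"
      using Seq \<omega> by blast
  next
    fix \<omega> assume "\<omega> \<in> (\<Union>q\<in>{q::rat. 0 \<le> real_of_rat q \<and> ennreal (real_of_rat q) < y}. S (real_of_rat q))"
    then obtain q :: rat where q: "0 \<le> real_of_rat q" "ennreal (real_of_rat q) < y" "\<omega> \<in> S (real_of_rat q)"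
      by blast
    then have \<omega>: "\<omega> \<in> space M" and "\<exists>t\<in>{0..real_of_rat q}. f t \<omega> = 0" using Seq by blast+
    then have "first_zero_time f \<omega> < y"
      unfolding first_zero_time_less_iff[of f \<omega>, OF f0[OF \<omega>]] using q by blast
    then show "\<omega> \<in> {\<omega>\<in>space M. first_zero_time f \<omega> < y}" using \<omega> by blast
  qed
  also have "\<dots> \<in> sets M"
    by (intro sets.countable_UN' countable_Collect countable_rat) (auto simp: Sm)
  finally show "{\<omega>\<in>space M. first_zero_time f \<omega> < y} \<in> sets M" .
qed

lemma mult_pos_before_first_zero_time:
  assumes cont: "continuous_on {0..Z} (\<lambda>t. f t \<omega>)" and f0: "f 0 \<omega> \<noteq> 0"
    and Z: "ennreal Z < first_zero_time f \<omega>" and r: "r \<in> {0..Z}"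
  shows "f 0 \<omega> * f r \<omega> > 0"
proof (rule ccontr)
  assume "\<not> f 0 \<omega> * f r \<omega> > 0"
  moreover have "0 \<le> f 0 \<omega> * f 0 \<omega>" by simp
  moreover have "continuous_on {0..r} (\<lambda>t. f 0 \<omega> * f t \<omega>)"
    using r by (auto intro!: continuous_intros intro: continuous_on_subset[OF cont])
  ultimately obtain t where t: "0 \<le> t" "t \<le> r" "f 0 \<omega> * f t \<omega> = 0"
    using IVT2'[where f="\<lambda>t. f 0 \<omega> * f t \<omega>" and a=0 and b=r and y=0] r by auto
  then have "f t \<omega> = 0" "t > 0" using f0 by (auto simp: less_le)
  then have "first_zero_time f \<omega> \<le> ennreal t"
    unfolding first_zero_time_def by (intro Inf_lower) auto
  also have "ennreal t \<le> ennreal Z" using t r by (auto intro: ennreal_leI)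
  finally show False using Z by simp
qed

section \<open>Gaussian estimates\<close>

lemma nn_integral_normal_density:
  assumes "\<sigma> > 0" shows "(\<integral>\<^sup>+y. ennreal (normal_density \<mu> \<sigma> y) \<partial>lborel) = 1"
proof -
  interpret P: prob_space "density lborel (normal_density \<mu> \<sigma>)"
    using prob_space_normal_density assms by blast
  have "emeasure (density lborel (normal_density \<mu> \<sigma>)) UNIV = 1"
    using P.emeasure_space_1 by simp
  then show ?thesis by (simp add: emeasure_density)
qed

lemma normal_density_mult_exp:
  assumes "\<tau> > 0"
  shows "normal_density 0 \<tau> y * exp (x / \<tau>\<^sup>2 * (y - x)) = exp (- x\<^sup>2 / (2 * \<tau>\<^sup>2)) * normal_density x \<tau> y"
proof -
  have "- (y - 0)\<^sup>2 / (2 * \<tau>\<^sup>2) + x / \<tau>\<^sup>2 * (y - x) = - x\<^sup>2 / (2 * \<tau>\<^sup>2) + - (y - x)\<^sup>2 / (2 * \<tau>\<^sup>2)"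
    using assms by (simp add: field_simps power2_eq_square)
  then show ?thesis
    unfolding normal_density_def by (simp add: exp_add[symmetric] mult_ac)
qed

lemma (in prob_space) prob_normal_gt_le:
  assumes Z: "distributed M lborel Z (normal_density 0 \<tau>)" and \<tau>: "\<tau> > 0" and x: "x \<ge> 0"
  shows "prob {\<omega>\<in>space M. Z \<omega> > x} \<le> exp (- x\<^sup>2 / (2 * \<tau>\<^sup>2))"
proof -
  have Zm: "Z \<in> borel_measurable M" using distributed_measurable[OF Z] by simp
  define l where "l = x / \<tau>\<^sup>2"
  have l: "l \<ge> 0" using x \<tau> by (simp add: l_def)
  have "emeasure M {\<omega>\<in>space M. Z \<omega> > x} = (\<integral>\<^sup>+\<omega>. indicator {\<omega>\<in>space M. Z \<omega> > x} \<omega> \<partial>M)"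
    using Zm by (intro nn_integral_indicator[symmetric]) measurable
  also have "\<dots> \<le> (\<integral>\<^sup>+\<omega>. ennreal (exp (l * (Z \<omega> - x))) \<partial>M)"
  proof (rule nn_integral_mono)
    fix \<omega> show "indicator {\<omega>\<in>space M. Z \<omega> > x} \<omega> \<le> ennreal (exp (l * (Z \<omega> - x)))"
      using l by (auto simp: indicator_def)
  qed
  also have "\<dots> = (\<integral>\<^sup>+y. ennreal (normal_density 0 \<tau> y) * ennreal (exp (l * (y - x))) \<partial>lborel)"
    by (rule distributed_nn_integral[OF Z, symmetric]) measurable
  also have "\<dots> = (\<integral>\<^sup>+y. ennreal (exp (- x\<^sup>2 / (2 * \<tau>\<^sup>2))) * ennreal (normal_density x \<tau> y) \<partial>lborel)"
  proof (intro nn_integral_cong)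
    fix y
    have "ennreal (normal_density 0 \<tau> y) * ennreal (exp (l * (y - x)))
        = ennreal (normal_density 0 \<tau> y * exp (l * (y - x)))"
      by (simp add: ennreal_mult')
    also have "\<dots> = ennreal (exp (- x\<^sup>2 / (2 * \<tau>\<^sup>2)) * normal_density x \<tau> y)"
      using normal_density_mult_exp[OF \<tau>, of y x] by (simp add: l_def)
    also have "\<dots> = ennreal (exp (- x\<^sup>2 / (2 * \<tau>\<^sup>2))) * ennreal (normal_density x \<tau> y)"
      by (simp add: ennreal_mult')
    finally show "ennreal (normal_density 0 \<tau> y) * ennreal (exp (l * (y - x)))
        = ennreal (exp (- x\<^sup>2 / (2 * \<tau>\<^sup>2))) * ennreal (normal_density x \<tau> y)" .
  qed
  also have "\<dots> = ennreal (exp (- x\<^sup>2 / (2 * \<tau>\<^sup>2)))"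
    by (subst nn_integral_cmult) (auto simp: nn_integral_normal_density[OF \<tau>])
  finally show ?thesis
    by (simp add: emeasure_eq_measure)
qed

lemma (in prob_space) prob_normal_le_neg_ge:
  assumes Z: "distributed M lborel Z (normal_density 0 \<tau>)" and \<tau>: "\<tau> > 0" and y: "y \<ge> 0"
  shows "prob {\<omega>\<in>space M. Z \<omega> \<le> - y} \<ge> normal_density 0 \<tau> (y + 1)"
proof -
  have Zm: "Z \<in> borel_measurable M" using distributed_measurable[OF Z] by simp
  have "emeasure M {\<omega>\<in>space M. Z \<omega> \<le> - y} = emeasure (distr M lborel Z) {..-y}"
    using Zm by (subst emeasure_distr) (auto intro!: arg_cong[where f="emeasure M"])
  also have "\<dots> = emeasure (density lborel (normal_density 0 \<tau>)) {..-y}"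
    using Z by (simp add: distributed_def)
  also have "\<dots> = (\<integral>\<^sup>+t. ennreal (normal_density 0 \<tau> t) * indicator {..-y} t \<partial>lborel)"
    by (simp add: emeasure_density)
  also have "\<dots> \<ge> (\<integral>\<^sup>+t. ennreal (normal_density 0 \<tau> (y+1)) * indicator {-y-1..-y} t \<partial>lborel)"
  proof (rule nn_integral_mono)
    fix t
    show "ennreal (normal_density 0 \<tau> (y+1)) * indicator {-y-1..-y} t
        \<le> ennreal (normal_density 0 \<tau> t) * indicator {..-y} t"
    proof (cases "t \<in> {-y-1..-y}")
      case True
      then have "t\<^sup>2 \<le> (y+1)\<^sup>2" using y by (auto intro!: power2_le_iff_abs_le[THEN iffD2] simp: abs_if)
      then have "normal_density 0 \<tau> (y+1) \<le> normal_density 0 \<tau> t"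
        using \<tau> unfolding normal_density_def
        by (auto intro!: mult_left_mono divide_right_mono simp: field_simps)
      then show ?thesis using True by (auto simp: indicator_def intro: ennreal_leI)
    qed (auto simp: indicator_def)
  qed
  also have "(\<integral>\<^sup>+t. ennreal (normal_density 0 \<tau> (y+1)) * indicator {-y-1..-y} t \<partial>lborel)
      = ennreal (normal_density 0 \<tau> (y+1))"
    by (simp add: nn_integral_cmult_indicator)
  finally show ?thesis
    by (simp add: emeasure_eq_measure)
qed

lemma (in prob_space) prob_normal_gt_le_mono:
  assumes Z: "distributed M lborel Z (normal_density 0 \<tau>)"
    and \<tau>: "\<tau> > 0" "\<tau> \<le> \<tau>2" and \<theta>: "\<theta> \<ge> 0"
  shows "prob {\<omega>\<in>space M. Z \<omega> > \<theta>} \<le> exp (- \<theta>\<^sup>2 / (2 * \<tau>2\<^sup>2))"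
proof -
  have "\<tau>\<^sup>2 \<le> \<tau>2\<^sup>2" using \<tau> by (intro power_mono) auto
  then have "\<theta>\<^sup>2 / (2 * \<tau>2\<^sup>2) \<le> \<theta>\<^sup>2 / (2 * \<tau>\<^sup>2)" using \<tau> by (intro divide_left_mono) auto
  then have "exp (- \<theta>\<^sup>2 / (2 * \<tau>\<^sup>2)) \<le> exp (- \<theta>\<^sup>2 / (2 * \<tau>2\<^sup>2))" by simp
  with prob_normal_gt_le[OF Z \<tau>(1) \<theta>] show ?thesis by linarith
qed

lemma (in prob_space) prob_normal_gt_neg_le:
  assumes Z: "distributed M lborel Z (normal_density 0 \<tau>)"
    and \<tau>1: "\<tau>1 > 0" "\<tau>1 \<le> \<tau>" and \<tau>2: "\<tau> \<le> \<tau>2" and y: "y \<ge> 0"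
  shows "prob {\<omega>\<in>space M. Z \<omega> > - y} \<le> exp (- (exp (- (y+1)\<^sup>2 / (2 * \<tau>1\<^sup>2)) / (\<tau>2 * sqrt (2*pi))))"
proof -
  have \<tau>: "\<tau> > 0" using \<tau>1 by linarith
  have Zm: "Z \<in> borel_measurable M" using distributed_measurable[OF Z] by simp
  have "space M - {\<omega>\<in>space M. Z \<omega> \<le> - y} = {\<omega>\<in>space M. Z \<omega> > - y}" by auto
  then have compl: "prob {\<omega>\<in>space M. Z \<omega> > - y} = 1 - prob {\<omega>\<in>space M. Z \<omega> \<le> - y}"
    using prob_compl[of "{\<omega>\<in>space M. Z \<omega> \<le> - y}"] Zm by (auto simp: measurable)
  have "exp (- (y+1)\<^sup>2 / (2 * \<tau>1\<^sup>2)) / (\<tau>2 * sqrt (2*pi)) \<le> normal_density 0 \<tau> (y + 1)"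
  proof -
    have s: "sqrt (2 * pi * \<tau>\<^sup>2) = \<tau> * sqrt (2*pi)" using \<tau> by (simp add: real_sqrt_mult)
    have "\<tau>1\<^sup>2 \<le> \<tau>\<^sup>2" using \<tau>1 by (intro power_mono) auto
    then have "(y+1)\<^sup>2 / (2 * \<tau>\<^sup>2) \<le> (y+1)\<^sup>2 / (2 * \<tau>1\<^sup>2)" using \<tau>1 by (intro divide_left_mono) auto
    then have "exp (- (y+1)\<^sup>2 / (2 * \<tau>1\<^sup>2)) \<le> exp (- (y+1)\<^sup>2 / (2 * \<tau>\<^sup>2))" by simp
    moreover have "\<tau> * sqrt (2*pi) \<le> \<tau>2 * sqrt (2*pi)" using \<tau>2 by simp
    ultimately have "exp (- (y+1)\<^sup>2 / (2 * \<tau>1\<^sup>2)) / (\<tau>2 * sqrt (2*pi))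
        \<le> exp (- (y+1)\<^sup>2 / (2 * \<tau>\<^sup>2)) / (\<tau> * sqrt (2*pi))"
      using \<tau> by (intro frac_le) auto
    also have "\<dots> = normal_density 0 \<tau> (y + 1)"
      unfolding normal_density_def s by simp
    finally show ?thesis .
  qed
  with compl prob_normal_le_neg_ge[OF Z \<tau> y]
  have "prob {\<omega>\<in>space M. Z \<omega> > - y} \<le> 1 - exp (- (y+1)\<^sup>2 / (2 * \<tau>1\<^sup>2)) / (\<tau>2 * sqrt (2*pi))"
    by linarith
  also have "\<dots> \<le> exp (- (exp (- (y+1)\<^sup>2 / (2 * \<tau>1\<^sup>2)) / (\<tau>2 * sqrt (2*pi))))"
    using exp_ge_add_one_self[of "- (exp (- (y+1)\<^sup>2 / (2 * \<tau>1\<^sup>2)) / (\<tau>2 * sqrt (2*pi)))"] by simp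
  finally show ?thesis .
qed

lemma (in prob_space) prob_some_exceeds_or_none_drops_le:
  fixes G :: "nat \<Rightarrow> 'a \<Rightarrow> real"
  assumes ind: "indep_vars (\<lambda>_. borel) G {..<N}" and N: "N \<ge> 1"
    and dist: "\<And>k. k < N \<Longrightarrow> distributed M lborel (G k) (normal_density 0 \<tau>)"
    and \<tau>1: "\<tau>1 > 0" "\<tau>1 \<le> \<tau>" and \<tau>2: "\<tau> \<le> \<tau>2" and \<theta>: "\<theta> \<ge> 0" and y: "y \<ge> 0"
  shows "prob {\<omega>\<in>space M. (\<exists>k<N. G k \<omega> > \<theta>) \<or> (\<forall>k<N. G k \<omega> > - y)}
     \<le> real N * exp (- \<theta>\<^sup>2 / (2 * \<tau>2\<^sup>2))
        + exp (- real N * (exp (- (y+1)\<^sup>2 / (2 * \<tau>1\<^sup>2)) / (\<tau>2 * sqrt (2*pi))))"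
proof -
  have \<tau>: "\<tau> > 0" using \<tau>1 by linarith
  have Gm: "G k \<in> borel_measurable M" if "k < N" for k
    using distributed_measurable[OF dist[OF that]] by simp
  define A where "A k = {\<omega>\<in>space M. G k \<omega> > \<theta>}" for k
  define B where "B k = G k -` {-y<..} \<inter> space M" for k
  have Aev: "A k \<in> events" if "k < N" for k using Gm[OF that] unfolding A_def by measurable
  have Bev: "B k \<in> events" if "k < N" for k using Gm[OF that] unfolding B_def by measurable
  have INT_B: "(\<Inter>k\<in>{..<N}. B k) \<in> events"
    using Bev N by (intro sets.finite_INT) (auto simp: lessThan_empty_iff)
  have "{\<omega>\<in>space M. (\<exists>k<N. G k \<omega> > \<theta>) \<or> (\<forall>k<N. G k \<omega> > - y)} \<subseteq> (\<Union>k<N. A k) \<union> (\<Inter>k<N. B k)"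
    using N by (auto simp: A_def B_def)
  then have "prob {\<omega>\<in>space M. (\<exists>k<N. G k \<omega> > \<theta>) \<or> (\<forall>k<N. G k \<omega> > - y)}
      \<le> prob ((\<Union>k<N. A k) \<union> (\<Inter>k<N. B k))"
    using Aev INT_B by (intro finite_measure_mono) auto
  also have "\<dots> \<le> prob (\<Union>k<N. A k) + prob (\<Inter>k<N. B k)"
    using Aev INT_B by (intro measure_subadditive) auto
  also have "prob (\<Union>k<N. A k) \<le> (\<Sum>k<N. prob (A k))"
    by (rule finite_measure_subadditive_finite) (use Aev in auto)
  also have "(\<Sum>k<N. prob (A k)) \<le> (\<Sum>k<N. exp (- \<theta>\<^sup>2 / (2 * \<tau>2\<^sup>2)))"
    unfolding A_def using prob_normal_gt_le_mono[OF dist \<tau> \<tau>2 \<theta>] by (intro sum_mono) auto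
  also have "prob (\<Inter>k<N. B k) = (\<Prod>k<N. prob (B k))"
    unfolding B_def by (rule indep_varsD[OF ind]) (use N in \<open>auto simp: lessThan_empty_iff\<close>)
  also have "(\<Prod>k<N. prob (B k)) \<le> (\<Prod>k<N. exp (- (exp (- (y+1)\<^sup>2 / (2 * \<tau>1\<^sup>2)) / (\<tau>2 * sqrt (2*pi)))))"
  proof (rule prod_mono, intro conjI)
    fix k assume "k \<in> {..<N}"
    have "B k = {\<omega>\<in>space M. G k \<omega> > - y}" by (auto simp: B_def)
    then show "prob (B k) \<le> exp (- (exp (- (y+1)\<^sup>2 / (2 * \<tau>1\<^sup>2)) / (\<tau>2 * sqrt (2*pi))))"
      using prob_normal_gt_neg_le[OF dist \<tau>1 \<tau>2 y] \<open>k \<in> {..<N}\<close> by simp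
  qed simp
  also have "(\<Prod>k<N. exp (- (exp (- (y+1)\<^sup>2 / (2 * \<tau>1\<^sup>2)) / (\<tau>2 * sqrt (2*pi)))))
      = exp (- real N * (exp (- (y+1)\<^sup>2 / (2 * \<tau>1\<^sup>2)) / (\<tau>2 * sqrt (2*pi))))"
    by (simp add: exp_of_nat_mult[symmetric])
  finally show ?thesis by simp
qed

lemma sum_atLeastLessThan_block: "(\<Sum>l\<in>{k*n..<k*n+n}. g l) = (\<Sum>i<n. g (k*n+i :: nat))"
proof -
  have "(\<Sum>l\<in>{k*n..<k*n+n}. g l) = (\<Sum>l\<in>{0+k*n..<n+k*n}. g l)"
    by (simp add: add.commute)
  also have "\<dots> = (\<Sum>i\<in>{0..<n}. g (i + k*n))"
    by (rule sum.shift_bounds_nat_ivl)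
  finally show ?thesis by (simp add: lessThan_atLeast0 add.commute)
qed

lemma atLeastLessThan_block_subset:
  assumes "k < N"
  shows "{k*n..<k*n+n} \<subseteq> {..<N*n :: nat}"
proof -
  have "k*n + n \<le> N*n" using assms by (metis Suc_leI add.commute mult_Suc mult_le_mono1)
  then show ?thesis by auto
qed

lemma disjoint_family_on_blocks: "disjoint_family_on (\<lambda>k. {k*n..<k*n+n :: nat}) A"
proof (unfold disjoint_family_on_def, intro ballI impI)
  have sep: "{k*n..<k*n+n} \<inter> {k'*n..<k'*n+n} = {}" if "k < k'" for k k' :: nat
  proof -
    have "k*n + n \<le> k'*n" using that by (metis Suc_leI add.commute mult_Suc mult_le_mono1)
    then show ?thesis by auto
  qed
  fix k k' :: nat assume "k \<noteq> k'"
  then consider "k < k'" | "k' < k" by linarith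
  then show "{k*n..<k*n+n} \<inter> {k'*n..<k'*n+n} = {}"
    by cases (use sep in \<open>auto simp: Int_commute\<close>)
qed

lemma (in prob_space) indep_normal_weighted_block_sums:
  fixes D :: "nat \<Rightarrow> 'a \<Rightarrow> real"
  assumes ind: "indep_vars (\<lambda>_. borel) D {..<N*n}" and n: "n \<ge> 1"
    and dist: "\<And>l. distributed M lborel (D l) (normal_density 0 \<sigma>0)" and \<sigma>0: "\<sigma>0 > 0"
    and \<alpha>: "\<And>i. i < n \<Longrightarrow> \<alpha> i \<noteq> 0"
  shows "indep_vars (\<lambda>_. borel) (\<lambda>k \<omega>. \<Sum>i<n. \<alpha> i * D (k*n+i) \<omega>) {..<N}"
    and "k < N \<Longrightarrow> distributed M lborel (\<lambda>\<omega>. \<Sum>i<n. \<alpha> i * D (k*n+i) \<omega>)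
            (normal_density 0 (sqrt (\<Sum>i<n. (\<bar>\<alpha> i\<bar> * \<sigma>0)\<^sup>2)))"
proof -
  define K where "K k = {k*n..<k*n+n}" for k
  have sumeq: "(\<Sum>i<n. \<alpha> i * D (k*n+i) \<omega>) = (\<Sum>l\<in>K k. \<alpha> (l - k*n) * D l \<omega>)" for k \<omega>
    unfolding K_def sum_atLeastLessThan_block by simp
  have Ksub: "K k \<subseteq> {..<N*n}" if "k < N" for k
    unfolding K_def using that by (rule atLeastLessThan_block_subset)
  have disj: "disjoint_family_on K {..<N}"
    unfolding K_def by (rule disjoint_family_on_blocks)
  have R: "indep_vars (\<lambda>k. PiM (K k) (\<lambda>_. borel)) (\<lambda>k \<omega>. restrict (\<lambda>l. D l \<omega>) (K k)) {..<N}"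
    by (rule indep_vars_restrict[OF ind Ksub disj]) auto
  have R2: "indep_vars (\<lambda>_. borel) (\<lambda>k \<omega>. (\<lambda>f. \<Sum>l\<in>K k. \<alpha> (l - k*n) * f l) (restrict (\<lambda>l. D l \<omega>) (K k))) {..<N}"
    by (rule indep_vars_compose2[OF R]) (auto intro!: borel_measurable_sum borel_measurable_times measurable_component_singleton)
  show "indep_vars (\<lambda>_. borel) (\<lambda>k \<omega>. \<Sum>i<n. \<alpha> i * D (k*n+i) \<omega>) {..<N}"
    using R2 by (subst indep_vars_cong[where Y="\<lambda>k \<omega>. (\<lambda>f. \<Sum>l\<in>K k. \<alpha> (l - k*n) * f l) (restrict (\<lambda>l. D l \<omega>) (K k))" and N'="\<lambda>_. borel" and J="{..<N}"])
      (auto simp: sumeq intro!: sum.cong)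
  assume k: "k < N"
  have indK: "indep_vars (\<lambda>_. borel) (\<lambda>l \<omega>. \<alpha> (l - k*n) * D l \<omega>) (K k)"
    by (rule indep_vars_compose2[OF indep_vars_subset[OF ind Ksub[OF k]], where Y="\<lambda>l x. \<alpha> (l - k*n) * x"]) auto
  have dK: "distributed M lborel (\<lambda>\<omega>. \<alpha> (l - k*n) * D l \<omega>) (normal_density 0 (\<bar>\<alpha> (l - k*n)\<bar> * \<sigma>0))" if "l \<in> K k" for l
  proof -
    have "\<alpha> (l - k*n) \<noteq> 0" using that \<alpha> by (auto simp: K_def)
    from normal_density_affine[OF dist \<sigma>0 this, of 0] show ?thesis by simp
  qed
  have "distributed M lborel (\<lambda>\<omega>. \<Sum>l\<in>K k. \<alpha> (l - k*n) * D l \<omega>)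
      (normal_density (\<Sum>l\<in>K k. 0) (sqrt (\<Sum>l\<in>K k. (\<bar>\<alpha> (l - k*n)\<bar> * \<sigma>0)\<^sup>2)))"
    by (rule sum_indep_normal[OF _ _ indK]) (use n \<alpha> \<sigma>0 dK in \<open>auto simp: K_def\<close>)
  moreover have "(\<Sum>l\<in>K k. (\<bar>\<alpha> (l - k*n)\<bar> * \<sigma>0)\<^sup>2) = (\<Sum>i<n. (\<bar>\<alpha> i\<bar> * \<sigma>0)\<^sup>2)"
    unfolding K_def sum_atLeastLessThan_block by simp
  ultimately show "distributed M lborel (\<lambda>\<omega>. \<Sum>i<n. \<alpha> i * D (k*n+i) \<omega>)
            (normal_density 0 (sqrt (\<Sum>i<n. (\<bar>\<alpha> i\<bar> * \<sigma>0)\<^sup>2)))"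
    by (simp add: sumeq)
qed

lemma wiener_grid_increments:
  fixes W :: "real \<Rightarrow> 'a \<Rightarrow> real"
  assumes wp: "wiener_process M W" and d: "d > 0"
  shows "distributed M lborel (\<lambda>\<omega>. W (real (Suc l) * d) \<omega> - W (real l * d) \<omega>) (normal_density 0 (sqrt d))"
    and "prob_space.indep_vars M (\<lambda>_. borel) (\<lambda>l \<omega>. W (real (Suc l) * d) \<omega> - W (real l * d) \<omega>) {..<K}"
proof -
  interpret prob_space M using wp by (simp add: wiener_process_def)
  have dist: "\<And>s t. 0 \<le> s \<Longrightarrow> s < t \<Longrightarrow> distributed M lborel (\<lambda>\<omega>. W t \<omega> - W s \<omega>) (normal_density 0 (sqrt (t - s)))"
    using wp by (simp add: wiener_process_def)
  have "real (Suc l) * d - real l * d = d" by (simp add: algebra_simps)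
  then show "distributed M lborel (\<lambda>\<omega>. W (real (Suc l) * d) \<omega> - W (real l * d) \<omega>) (normal_density 0 (sqrt d))"
    using dist[of "real l * d" "real (Suc l) * d"] d by (simp add: algebra_simps)
  define ts where "ts = map (\<lambda>j. real j * d) [0..<Suc K]"
  have sorted: "sorted_wrt (<) ts"
    unfolding ts_def sorted_wrt_map
    by (rule sorted_wrt_mono_rel[OF _ sorted_wrt_upt]) (use d in auto)
  have nonneg: "\<forall>t\<in>set ts. 0 \<le> t" using d by (auto simp: ts_def)
  have ind: "indep_vars (\<lambda>_. borel) (\<lambda>i \<omega>. W (ts ! Suc i) \<omega> - W (ts ! i) \<omega>) {..<length ts - 1}"
    using wp sorted nonneg by (simp add: wiener_process_def)
  show "indep_vars (\<lambda>_. borel) (\<lambda>l \<omega>. W (real (Suc l) * d) \<omega> - W (real l * d) \<omega>) {..<K}"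
    using ind
    by (subst (asm) indep_vars_cong[where J="{..<K}" and Y="\<lambda>l \<omega>. W (real (Suc l) * d) \<omega> - W (real l * d) \<omega>" and N'="\<lambda>_. borel"])
       (auto simp: ts_def nth_append simp del: upt_Suc)
qed

section \<open>Block noise\<close>

text \<open>On a block \<open>[kh, (k+1)h]\<close> cut into \<open>n\<close> steps, \<open>block_noise x h n k\<close> is the left Riemann
discretisation of \<open>x((k+1)h) - x(kh) - (c/12) \<integral>\<^bsub>kh\<^esub>\<^bsup>(k+1)h\<^esup> (x r - x(kh)) dr\<close> for \<open>c h = 11\<close>,
rewritten (by summation by parts, see \<open>block_noise_eq\<close>) as a weighted sum of the increments of \<open>x\<close>.\<close>

definition block_weight :: "nat \<Rightarrow> nat \<Rightarrow> real" where
  "block_weight n i = 1 - 11/12 * real (n - 1 - i) / real n"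

definition block_noise :: "(real \<Rightarrow> real) \<Rightarrow> real \<Rightarrow> nat \<Rightarrow> nat \<Rightarrow> real" where
  "block_noise x h n k =
     (\<Sum>i<n. block_weight n i * (x (real (Suc (k*n+i)) * (h / real n)) - x (real (k*n+i) * (h / real n))))"

lemma sum_lessThan_partial_sums:
  fixes g :: "nat \<Rightarrow> real"
  shows "(\<Sum>i<n. \<Sum>l<i. g l) = (\<Sum>l<n. real (n - 1 - l) * g l)"
proof (induction n)
  case 0 then show ?case by simp
next
  case (Suc n)
  have "(\<Sum>l<Suc n. real (Suc n - 1 - l) * g l) = (\<Sum>l<n. real (n - l) * g l)"
    by simp
  also have "\<dots> = (\<Sum>l<n. real (n - 1 - l) * g l + g l)"
    by (intro sum.cong) (auto simp: of_nat_diff algebra_simps)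
  finally show ?case using Suc by (simp add: sum.distrib)
qed

lemma block_noise_eq:
  assumes n: "n > 0"
  shows "block_noise x h n k = x (real (Suc k) * h) - x (real k * h)
           - 11 / (12 * real n) * (\<Sum>i<n. x (real k * h + real i * (h / real n)) - x (real k * h))"
proof -
  define f where "f j = x (real j * (h / real n))" for j
  define \<Delta> where "\<Delta> i = f (Suc (k*n+i)) - f (k*n+i)" for i
  have pts: "x (real k * h + real i * (h / real n)) = f (k*n+i)" for i
    using n by (simp add: f_def field_simps)
  have tel: "f (k*n+i) - f (k*n) = (\<Sum>l<i. \<Delta> l)" for i
    using sum_lessThan_telescope[of "\<lambda>j. f (k*n+j)" i] by (simp add: \<Delta>_def)
  have "block_noise x h n k = (\<Sum>l<n. \<Delta> l - 11 / (12 * real n) * (real (n - 1 - l) * \<Delta> l))"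
    unfolding block_noise_def
    by (rule sum.cong) (use n in \<open>auto simp: block_weight_def \<Delta>_def f_def field_simps\<close>)
  also have "\<dots> = (\<Sum>l<n. \<Delta> l) - 11 / (12 * real n) * (\<Sum>l<n. real (n - 1 - l) * \<Delta> l)"
    by (simp add: sum_subtractf sum_distrib_left)
  also have "\<dots> = (f (k*n+n) - f (k*n)) - 11 / (12 * real n) * (\<Sum>i<n. f (k*n+i) - f (k*n))"
    by (simp add: tel sum_lessThan_partial_sums)
  finally have "block_noise x h n k
      = (f (k*n+n) - f (k*n)) - 11 / (12 * real n) * (\<Sum>i<n. f (k*n+i) - f (k*n))" .
  moreover have "real (k*n+n) * (h / real n) = real (Suc k) * h" "real (k*n) * (h / real n) = real k * h"
    using n by (simp_all add: field_simps)
  then have "x (real (Suc k) * h) = f (k*n+n)" "x (real k * h) = f (k*n)"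
    unfolding f_def by (metis arg_cong)+
  moreover have "(\<Sum>i<n. x (real k * h + real i * (h / real n)) - f (k*n)) = (\<Sum>i<n. f (k*n+i) - f (k*n))"
    by (simp only: pts)
  ultimately show ?thesis by simp
qed

lemma sum_squares_Suc_ge: "(\<Sum>i<n. (real (Suc i))\<^sup>2) \<ge> real n ^ 3 / 3"
proof (induction n)
  case 0 then show ?case by simp
next
  case (Suc n)
  have "real (Suc n) ^ 3 / 3 = real n ^ 3 / 3 + (real n)\<^sup>2 + real n + 1/3"
    by (simp add: power3_eq_cube power2_eq_square algebra_simps)
  also have "\<dots> \<le> real n ^ 3 / 3 + (real (Suc n))\<^sup>2"
    by (simp add: power2_eq_square algebra_simps)
  also have "\<dots> \<le> (\<Sum>i<n. (real (Suc i))\<^sup>2) + (real (Suc n))\<^sup>2" using Suc by simp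
  finally show ?case by simp
qed

lemma block_weight_bounds:
  assumes i: "i < n"
  shows "real (Suc i) / real n \<le> block_weight n i" and "block_weight n i \<le> 1"
proof -
  have rn: "real n > 0" using i by simp
  have "real (n - 1 - i) = real n - real (Suc i)" using i by (simp add: of_nat_diff)
  then have "real (Suc i) / real n = 1 - real (n - 1 - i) / real n" using rn by (simp add: field_simps)
  moreover have "11/12 * real (n - 1 - i) / real n \<le> real (n - 1 - i) / real n"
    using rn by (intro divide_right_mono) auto
  ultimately show "real (Suc i) / real n \<le> block_weight n i" by (simp add: block_weight_def)
  show "block_weight n i \<le> 1" by (simp add: block_weight_def)
qed

lemma block_weight_pos:
  assumes "i < n"
  shows "block_weight n i > 0"
proof -
  have "0 < real (Suc i) / real n" using assms by simp
  then show ?thesis using block_weight_bounds(1)[OF assms] by linarith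
qed

lemma sum_block_weight_squares_bounds:
  assumes n: "n \<ge> 1"
  shows "real n / 3 \<le> (\<Sum>i<n. (block_weight n i)\<^sup>2)" and "(\<Sum>i<n. (block_weight n i)\<^sup>2) \<le> real n"
proof -
  have rn: "real n > 0" using n by simp
  have "(\<Sum>i<n. (real (Suc i) / real n)\<^sup>2) \<le> (\<Sum>i<n. (block_weight n i)\<^sup>2)"
    by (intro sum_mono power_mono block_weight_bounds(1)) auto
  moreover have "(\<Sum>i<n. (real (Suc i) / real n)\<^sup>2) = (\<Sum>i<n. (real (Suc i))\<^sup>2) / (real n)\<^sup>2"
    by (simp add: power_divide sum_divide_distrib)
  moreover have "(real n ^ 3 / 3) / (real n)\<^sup>2 \<le> (\<Sum>i<n. (real (Suc i))\<^sup>2) / (real n)\<^sup>2"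
    using sum_squares_Suc_ge[of n] rn by (intro divide_right_mono) auto
  moreover have "(real n ^ 3 / 3) / (real n)\<^sup>2 = real n / 3"
    using rn by (simp add: power2_eq_square power3_eq_cube)
  ultimately show "real n / 3 \<le> (\<Sum>i<n. (block_weight n i)\<^sup>2)" by linarith
  have "(\<Sum>i<n. (block_weight n i)\<^sup>2) \<le> (\<Sum>i<n. 1)"
    using block_weight_bounds(2) block_weight_pos by (intro sum_mono power_le_one) (auto intro: less_imp_le)
  then show "(\<Sum>i<n. (block_weight n i)\<^sup>2) \<le> real n" by simp
qed

lemma wiener_block_noise_normal:
  assumes wp: "wiener_process M W" and a: "a \<noteq> 0" and h: "h > 0" and n: "n \<ge> 1"
  obtains \<tau> where "\<bar>a\<bar> * sqrt h / sqrt 3 \<le> \<tau>" and "\<tau> \<le> \<bar>a\<bar> * sqrt h"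
    and "prob_space.indep_vars M (\<lambda>_. borel) (\<lambda>k \<omega>. block_noise (\<lambda>t. a * W t \<omega>) h n k) {..<N}"
    and "\<And>k. k < N \<Longrightarrow> distributed M lborel (\<lambda>\<omega>. block_noise (\<lambda>t. a * W t \<omega>) h n k) (normal_density 0 \<tau>)"
proof -
  interpret prob_space M using wp by (simp add: wiener_process_def)
  define d where "d = h / real n"
  have d: "d > 0" using h n by (simp add: d_def)
  define D where "D l \<omega> = W (real (Suc l) * d) \<omega> - W (real l * d) \<omega>" for l \<omega>
  define \<alpha> where "\<alpha> i = a * block_weight n i" for i
  have noise_eq: "block_noise (\<lambda>t. a * W t \<omega>) h n k = (\<Sum>i<n. \<alpha> i * D (k*n+i) \<omega>)" for k \<omega>
    by (simp add: block_noise_def \<alpha>_def D_def d_def right_diff_distrib mult_ac)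
  have Dd: "distributed M lborel (D l) (normal_density 0 (sqrt d))" for l
    using wiener_grid_increments(1)[OF wp d, of l] by (simp add: D_def[abs_def])
  have Di: "indep_vars (\<lambda>_. borel) D {..<N*n}"
    using wiener_grid_increments(2)[OF wp d, of "N*n"] by (simp add: D_def[abs_def])
  have \<alpha>: "\<alpha> i \<noteq> 0" if "i < n" for i
    using a block_weight_pos[OF that] by (simp add: \<alpha>_def)
  have sd: "sqrt d > 0" using d by simp
  define \<tau> where "\<tau> = sqrt (\<Sum>i<n. (\<bar>\<alpha> i\<bar> * sqrt d)\<^sup>2)"
  have \<tau>_sq: "\<tau>\<^sup>2 = (\<bar>a\<bar> * sqrt h)\<^sup>2 / real n * (\<Sum>i<n. (block_weight n i)\<^sup>2)"
    using d h n by (simp add: \<tau>_def \<alpha>_def d_def power_mult_distrib sum_distrib_left sum_nonneg ac_simps)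
  have "(\<bar>a\<bar> * sqrt h / sqrt 3)\<^sup>2 = (\<bar>a\<bar> * sqrt h)\<^sup>2 / real n * (real n / 3)"
    using n by (simp add: power_divide)
  also have "\<dots> \<le> \<tau>\<^sup>2"
    unfolding \<tau>_sq using sum_block_weight_squares_bounds(1)[OF n] by (intro mult_left_mono) auto
  finally have lower: "(\<bar>a\<bar> * sqrt h / sqrt 3)\<^sup>2 \<le> \<tau>\<^sup>2" .
  have "\<tau>\<^sup>2 \<le> (\<bar>a\<bar> * sqrt h)\<^sup>2 / real n * real n"
    unfolding \<tau>_sq using sum_block_weight_squares_bounds(2)[OF n] by (intro mult_left_mono) auto
  also have "\<dots> = (\<bar>a\<bar> * sqrt h)\<^sup>2" using n by simp
  finally have upper: "\<tau>\<^sup>2 \<le> (\<bar>a\<bar> * sqrt h)\<^sup>2" .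
  have "0 \<le> \<tau>" by (simp add: \<tau>_def sum_nonneg)
  with lower upper have "\<bar>a\<bar> * sqrt h / sqrt 3 \<le> \<tau>" "\<tau> \<le> \<bar>a\<bar> * sqrt h"
    using h by (auto intro!: power2_le_imp_le)
  moreover have "indep_vars (\<lambda>_. borel) (\<lambda>k \<omega>. block_noise (\<lambda>t. a * W t \<omega>) h n k) {..<N}"
    using indep_normal_weighted_block_sums(1)[where \<alpha>=\<alpha>, OF Di n Dd sd \<alpha>] by (simp add: noise_eq)
  moreover have "distributed M lborel (\<lambda>\<omega>. block_noise (\<lambda>t. a * W t \<omega>) h n k) (normal_density 0 \<tau>)"
    if "k < N" for k
    using indep_normal_weighted_block_sums(2)[where \<alpha>=\<alpha>, OF Di n Dd sd \<alpha> that] by (simp add: noise_eq \<tau>_def)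
  ultimately show ?thesis using that by blast
qed

section \<open>Deterministic estimates\<close>

lemma positive_recursion_dichotomy:
  fixes U g :: "nat \<Rightarrow> real"
  assumes U0: "U 0 \<le> L" and step: "\<And>k. k < N \<Longrightarrow> U (Suc k) \<le> U k / 12 + g k + 1"
    and pos: "\<And>k. k \<le> N \<Longrightarrow> U k > 0"
  shows "(\<exists>k<N. g k > L - 1) \<or> (\<forall>k<N. g k > - (L/6) - 1)"
proof (cases "\<exists>k<N. g k > L - 1")
  case True then show ?thesis by blast
next
  case False
  then have g: "\<And>k. k < N \<Longrightarrow> g k \<le> L - 1" using not_less by blast
  have L: "L > 0" using U0 pos[of 0] by linarith
  have bound: "k \<le> N \<Longrightarrow> U k \<le> 2 * L" for k
  proof (induction k)
    case 0 then show ?case using U0 L by simp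
  next
    case (Suc k)
    then have "U k \<le> 2 * L" by simp
    then show ?case using step[of k] g[of k] Suc.prems L by simp
  qed
  have "\<forall>k<N. g k > - (L/6) - 1"
  proof (intro allI impI)
    fix k assume k: "k < N"
    have "0 < U (Suc k)" using pos[of "Suc k"] k by simp
    also have "\<dots> \<le> U k / 12 + g k + 1" using step[OF k] .
    finally show "g k > - (L/6) - 1" using bound[of k] k by simp
  qed
  then show ?thesis by blast
qed

lemma exp_neg_le_256_div_power4:
  fixes z :: real
  assumes z: "z > 0"
  shows "exp (- z) \<le> 256 / z^4"
proof -
  have "(z/4)^4 \<le> (1 + z/4)^4" using z by (intro power_mono) auto
  also have "\<dots> \<le> exp (z/4) ^ 4" using z exp_ge_add_one_self[of "z/4"] by (intro power_mono) auto
  also have "exp (z/4) ^ 4 = exp z" by (simp add: exp_of_nat_mult[symmetric])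
  finally have "z^4 / 256 \<le> exp z" by (simp add: power_divide)
  then show ?thesis using z by (simp add: exp_minus divide_simps mult.commute)
qed

lemma large_deviation_term_le:
  fixes x \<tau> q :: real
  assumes \<tau>: "\<tau> > 0" and x: "x \<ge> 1" and q: "q \<ge> \<tau> * sqrt (6 * ln (x + 2))"
  shows "x * exp (- q\<^sup>2 / (2 * \<tau>\<^sup>2)) \<le> 1 / x\<^sup>2"
proof -
  define l where "l = ln (x + 2)"
  have l0: "l \<ge> 0" using x by (simp add: l_def)
  have "(\<tau> * sqrt (6 * l))\<^sup>2 \<le> q\<^sup>2"
    using \<tau> l0 q by (intro power_mono) (auto simp: l_def)
  then have "\<tau>\<^sup>2 * (6 * l) \<le> q\<^sup>2" using l0 by (simp add: power_mult_distrib)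
  then have "- q\<^sup>2 / (2 * \<tau>\<^sup>2) \<le> - 3 * l" using \<tau> by (simp add: field_simps)
  then have "exp (- q\<^sup>2 / (2 * \<tau>\<^sup>2)) \<le> exp (- 3 * l)" by simp
  also have "exp (- 3 * l) = 1 / (x+2)^3"
  proof -
    have "exp (3 * l) = exp l ^ 3" using exp_of_nat_mult[of 3 l] by simp
    also have "exp l = x + 2" using x by (simp add: l_def)
    finally show ?thesis by (simp add: exp_minus inverse_eq_divide)
  qed
  finally have "x * exp (- q\<^sup>2 / (2 * \<tau>\<^sup>2)) \<le> x / (x+2)^3"
    using x by (simp add: divide_simps)
  also have "x / (x+2)^3 \<le> 1 / x\<^sup>2"
  proof -
    have "x^3 \<le> (x+2)^3" using x by (intro power_mono) auto
    then have "x * x\<^sup>2 \<le> (x+2)^3" by (simp add: power3_eq_cube power2_eq_square)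
    moreover have "(x+2)^3 > 0" "x\<^sup>2 > 0" using x by auto
    ultimately show ?thesis by (simp add: divide_simps mult.commute)
  qed
  finally show ?thesis .
qed

lemma small_ball_density_ge:
  fixes x \<tau> A :: real
  assumes \<tau>: "\<tau> > 0" and x: "x \<ge> 1"
  shows "exp (- 3 * A\<^sup>2 / \<tau>\<^sup>2) / (\<tau> * sqrt (2*pi)) / sqrt (x + 2)
         \<le> exp (- (A + \<tau> * sqrt (6 * ln (x + 2)) / 6)\<^sup>2 / (2 * (\<tau> / sqrt 3)\<^sup>2)) / (\<tau> * sqrt (2*pi))"
proof -
  define l where "l = ln (x + 2)"
  have l0: "l \<ge> 0" using x by (simp add: l_def)
  define q where "q = \<tau> * sqrt (6 * l) / 6"
  have q2: "q\<^sup>2 = \<tau>\<^sup>2 * l / 6" using l0 by (simp add: q_def power_mult_distrib power_divide)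
  have "0 \<le> (A - q)\<^sup>2" by simp
  then have "(A + q)\<^sup>2 \<le> 2 * A\<^sup>2 + 2 * q\<^sup>2" unfolding power2_sum power2_diff by linarith
  then have "(A + q)\<^sup>2 / (2 * (\<tau> / sqrt 3)\<^sup>2) \<le> (2 * A\<^sup>2 + 2 * q\<^sup>2) / (2 * (\<tau> / sqrt 3)\<^sup>2)"
    using \<tau> by (intro divide_right_mono) auto
  also have "\<dots> = 3 * A\<^sup>2 / \<tau>\<^sup>2 + l / 2" using \<tau> unfolding q2 by (simp add: power_divide field_simps)
  finally have exp_le: "exp (- 3 * A\<^sup>2 / \<tau>\<^sup>2 - l / 2) \<le> exp (- (A + q)\<^sup>2 / (2 * (\<tau> / sqrt 3)\<^sup>2))"
    by simp
  have "sqrt (x+2) = exp (l/2)" using x by (simp add: l_def powr_half_sqrt[symmetric] powr_def)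
  then have "exp (- 3 * A\<^sup>2 / \<tau>\<^sup>2) / (\<tau> * sqrt (2*pi)) / sqrt (x + 2)
      = exp (- 3 * A\<^sup>2 / \<tau>\<^sup>2 - l / 2) / (\<tau> * sqrt (2*pi))"
    by (simp add: exp_diff divide_divide_eq_left mult.commute)
  also have "\<dots> \<le> exp (- (A + q)\<^sup>2 / (2 * (\<tau> / sqrt 3)\<^sup>2)) / (\<tau> * sqrt (2*pi))"
    using exp_le \<tau> by (intro divide_right_mono) auto
  finally show ?thesis by (simp add: q_def l_def)
qed

lemma small_ball_term_le:
  fixes x \<tau> A :: real
  assumes \<tau>: "\<tau> > 0" and x: "x \<ge> 1"
  defines "C0 \<equiv> exp (- 3 * A\<^sup>2 / \<tau>\<^sup>2) / (\<tau> * sqrt (2*pi))"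
  shows "exp (- x * (exp (- (A + \<tau> * sqrt (6 * ln (x + 2)) / 6)\<^sup>2 / (2 * (\<tau> / sqrt 3)\<^sup>2))
                   / (\<tau> * sqrt (2*pi))))
         \<le> 2304 / C0^4 / x\<^sup>2"
proof -
  have C0: "C0 > 0" using \<tau> by (simp add: C0_def)
  have "x * (C0 / sqrt (x+2))
      \<le> x * (exp (- (A + \<tau> * sqrt (6 * ln (x + 2)) / 6)\<^sup>2 / (2 * (\<tau> / sqrt 3)\<^sup>2)) / (\<tau> * sqrt (2*pi)))"
    using x small_ball_density_ge[OF \<tau> x, of A] unfolding C0_def by (intro mult_left_mono) auto
  then have "exp (- x * (exp (- (A + \<tau> * sqrt (6 * ln (x + 2)) / 6)\<^sup>2 / (2 * (\<tau> / sqrt 3)\<^sup>2))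
                       / (\<tau> * sqrt (2*pi))))
      \<le> exp (- (x * (C0 / sqrt (x+2))))"
    by simp
  also have "\<dots> \<le> 256 / (x * (C0 / sqrt (x+2)))^4"
    using x C0 by (intro exp_neg_le_256_div_power4) simp
  also have "\<dots> = 256 * (x+2)\<^sup>2 / (x^4 * C0^4)"
  proof -
    have "sqrt (x+2) ^ 4 = (sqrt (x+2) ^ 2) ^ 2" by (simp flip: power_mult)
    also have "\<dots> = (x+2)\<^sup>2" using x by simp
    finally have "(x * (C0 / sqrt (x+2)))^4 = x^4 * C0^4 / (x+2)\<^sup>2"
      by (simp add: power_mult_distrib power_divide)
    then show ?thesis using x C0 by simp
  qed
  also have "\<dots> \<le> 256 * (9 * x\<^sup>2) / (x^4 * C0^4)"
  proof -
    have "(x+2)\<^sup>2 \<le> (3 * x)\<^sup>2" using x by (intro power_mono) auto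
    then have "(x+2)\<^sup>2 \<le> 9 * x\<^sup>2" by (simp add: power_mult_distrib)
    then show ?thesis using x C0 by (intro divide_right_mono mult_left_mono) auto
  qed
  also have "\<dots> = 2304 / C0^4 / x\<^sup>2"
    using x C0 by (simp add: field_simps power2_eq_square power4_eq_xxxx)
  finally show ?thesis .
qed

lemma integral_equation_block_step:
  fixes u x :: "real \<Rightarrow> real"
  assumes c: "c > 0" and ch: "c * h = 11" and S: "S \<ge> 0" and n: "n > 0"
    and cu: "continuous_on {0..S+h} u" and cx: "continuous_on {0..S+h} x"
    and eq: "\<And>t. t \<in> {0..S+h} \<Longrightarrow> u t = u0 - c * integral {0..t} u + x t"
    and pos: "\<And>r. r \<in> {S..S+h} \<Longrightarrow> u r \<ge> 0"
    and osc: "\<And>r r'. r \<in> {S..S+h} \<Longrightarrow> r' \<in> {S..S+h} \<Longrightarrow> \<bar>r - r'\<bar> \<le> h / real n \<Longrightarrow> \<bar>x r - x r'\<bar> \<le> 1"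
  shows "u (S+h) \<le> u S / 12
           + (x (S+h) - x S - 11 / (12 * real n) * (\<Sum>i<n. x (S + real i * (h / real n)) - x S)) + 1"
proof -
  have h: "h > 0" using c ch zero_less_mult_pos[of c h] by simp
  define d where "d = h / real n"
  have d: "d > 0" using h n by (simp add: d_def)
  have nd: "real n * d = h" using n by (simp add: d_def)
  define J where "J = integral {S..S+h} (\<lambda>r. x r - x S)"
  define R where "R = d * (\<Sum>i<n. x (S + real i * d) - x S)"
  have "u (S+h) \<le> u S / (1+c*h) + (x (S+h) - x S) - c / (1+c*h) * J"
    unfolding J_def using positive_solution_step_le[OF c h S cu cx eq pos] .
  then have step: "u (S+h) \<le> u S / 12 + (x (S+h) - x S) - c / 12 * J"
    using ch by simp
  have contJ: "continuous_on {S..S + real n * d} (\<lambda>r. x r - x S)"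
    using cx S nd by (auto intro!: continuous_intros intro: continuous_on_subset)
  have "\<bar>integral {S..S + real n * d} (\<lambda>r. x r - x S) - R\<bar> \<le> real n * d * 1"
    unfolding R_def
  proof (rule left_Riemann_sum_error_le[OF d contJ])
    fix i r assume i: "i < n" and r: "r \<in> {S + real i * d..S + real (Suc i) * d}"
    have le: "real (Suc i) * d \<le> real n * d" using i d by (intro mult_right_mono) auto
    have ge: "0 \<le> real i * d" using d by simp
    have suc: "real (Suc i) * d = real i * d + d" by (simp add: algebra_simps)
    have "S + real i * d \<le> r" "r \<le> S + real i * d + d" using r suc by auto
    then have "S \<le> r" "r \<le> S + h" "S \<le> S + real i * d" "S + real i * d \<le> S + h"
        "r - (S + real i * d) \<le> d" "S + real i * d - r \<le> d"
      using le ge suc nd by linarith+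
    then show "\<bar>(x r - x S) - (x (S + real i * d) - x S)\<bar> \<le> 1"
      using osc[of r "S + real i * d", unfolded d_def[symmetric]] by (simp add: abs_le_iff)
  qed
  then have "R - h \<le> J" using nd by (simp add: J_def abs_le_iff)
  then have "c / 12 * (R - h) \<le> c / 12 * J" using c by (intro mult_left_mono) auto
  moreover have "c / 12 * R = 11 / (12 * real n) * (\<Sum>i<n. x (S + real i * d) - x S)"
    using ch n by (simp add: R_def d_def field_simps)
  ultimately show ?thesis using step ch by (simp add: d_def algebra_simps)
qed

lemma integral_equation_discrete_steps:
  fixes u x :: "real \<Rightarrow> real"
  assumes c: "c > 0" and ch: "c * h = 11"
    and cu: "continuous_on {0..} u" and cx: "continuous_on {0..} x"
    and eq: "\<And>t. t \<ge> 0 \<Longrightarrow> u t = u0 - c * integral {0..t} u + x t"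
    and pos: "\<And>r. r \<in> {0..real N * h} \<Longrightarrow> u r > 0"
  shows "\<forall>\<^sub>F n in sequentially. \<forall>k<N.
           u (real (Suc k) * h) \<le> u (real k * h) / 12 + block_noise x h n k + 1"
proof -
  have h: "h > 0" using c ch zero_less_mult_pos[of c h] by simp
  have "uniformly_continuous_on {0..real N * h} x"
    using compact_uniformly_continuous[OF continuous_on_subset[OF cx]] by auto
  then obtain \<delta> where \<delta>: "\<delta> > 0" and \<delta>x: "\<And>r r'. r \<in> {0..real N * h} \<Longrightarrow> r' \<in> {0..real N * h} \<Longrightarrow>
      dist r' r < \<delta> \<Longrightarrow> dist (x r') (x r) < 1"
    unfolding uniformly_continuous_on_def by (metis zero_less_one)
  obtain n0 :: nat where n0: "h / \<delta> < real n0" using reals_Archimedean2 by blast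
  show ?thesis
  proof (rule eventually_sequentiallyI[of "Suc n0"], intro allI impI)
    fix n k assume nn: "Suc n0 \<le> n" and k: "k < N"
    have n: "n > 0" and "h / \<delta> < real n" using n0 nn by auto
    then have h\<delta>: "h / real n < \<delta>" using \<delta> by (simp add: field_simps)
    define S where "S = real k * h"
    have S: "S \<ge> 0" using h by (simp add: S_def)
    have "real (Suc k) * h \<le> real N * h" using k h by (intro mult_right_mono) auto
    then have Sh: "S + h \<le> real N * h" by (simp add: S_def algebra_simps)
    have "u (S+h) \<le> u S / 12
           + (x (S+h) - x S - 11 / (12 * real n) * (\<Sum>i<n. x (S + real i * (h / real n)) - x S)) + 1"
    proof (rule integral_equation_block_step[OF c ch S n])
      show "continuous_on {0..S+h} u" "continuous_on {0..S+h} x"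
        using cu cx by (auto intro: continuous_on_subset)
      show "u t = u0 - c * integral {0..t} u + x t" if "t \<in> {0..S+h}" for t
        using eq that by simp
      show "u r \<ge> 0" if "r \<in> {S..S+h}" for r
        using pos[of r] that S Sh by simp
      show "\<bar>x r - x r'\<bar> \<le> 1" if "r \<in> {S..S+h}" "r' \<in> {S..S+h}" "\<bar>r - r'\<bar> \<le> h / real n" for r r'
        using \<delta>x[of r' r] that S Sh h\<delta> by (simp add: dist_real_def)
    qed
    moreover have "S + h = real (Suc k) * h" by (simp add: S_def algebra_simps)
    ultimately show "u (real (Suc k) * h) \<le> u (real k * h) / 12 + block_noise x h n k + 1"
      using block_noise_eq[OF n, of x h k] by (simp add: S_def)
  qed
qed

section \<open>Tail bounds\<close>

lemma emeasure_le_if_eventually_mem: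
  assumes E: "\<And>n. E n \<in> sets M" and A: "\<And>\<omega>. \<omega> \<in> A \<Longrightarrow> \<forall>\<^sub>F n in sequentially. \<omega> \<in> E n"
    and b: "\<forall>\<^sub>F n in sequentially. emeasure M (E n) \<le> b"
  shows "emeasure M A \<le> b"
proof -
  define F where "F j = (\<Inter>n\<in>{j..}. E n)" for j
  have F: "F j \<in> sets M" for j unfolding F_def using E by (intro sets.countable_INT') auto
  obtain n0 where n0: "\<And>n. n \<ge> n0 \<Longrightarrow> emeasure M (E n) \<le> b"
    using b by (auto simp: eventually_sequentially)
  have "A \<subseteq> (\<Union>j. F j)" using A by (fastforce simp: eventually_sequentially F_def)
  then have "emeasure M A \<le> emeasure M (\<Union>j. F j)"
    using F by (intro emeasure_mono) auto
  also have "\<dots> = (SUP j. emeasure M (F j))"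
    using F by (intro SUP_emeasure_incseq[symmetric]) (auto simp: incseq_def F_def)
  also have "\<dots> \<le> b"
  proof (rule SUP_least)
    fix j
    have "F j \<subseteq> E (max j n0)" by (auto simp: F_def)
    then have "emeasure M (F j) \<le> emeasure M (E (max j n0))" using E by (intro emeasure_mono) auto
    also have "\<dots> \<le> b" by (rule n0) simp
    finally show "emeasure M (F j) \<le> b" .
  qed
  finally show ?thesis .
qed

lemma ennreal_le_suminf_of_bool_less:
  fixes T :: ennreal
  assumes h: "h > 0"
  shows "T \<le> (\<Sum>N. ennreal h * of_bool (ennreal (real N * h) < T))"
proof -
  let ?f = "\<lambda>N. ennreal h * of_bool (ennreal (real N * h) < T)"
  have part: "ennreal (real K * h) \<le> suminf ?f" if K: "\<And>N. N < K \<Longrightarrow> ennreal (real N * h) < T" for K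
  proof -
    have "(\<Sum>N<K. ennreal h) = sum ?f {..<K}" using K by (intro sum.cong) auto
    also have "\<dots> \<le> suminf ?f" by (rule sum_le_suminf) auto
    finally show ?thesis using h by (simp add: ennreal_of_nat_eq_real_of_nat ennreal_mult)
  qed
  show ?thesis
  proof (cases T)
    case (real r)
    define K where "K = nat \<lceil>r / h\<rceil>"
    have "ennreal (real N * h) < T" if "N < K" for N
    proof -
      have "real N < r / h" using that by (simp add: K_def less_ceiling_iff zless_nat_eq_int_zless)
      then have "real N * h < r" using h by (simp add: field_simps)
      moreover have "0 \<le> real N * h" using h by simp
      ultimately show ?thesis using real by (auto intro!: ennreal_lessI)
    qed
    then have "ennreal (real K * h) \<le> suminf ?f" by (rule part)
    moreover have "r \<le> real K * h"
    proof -
      have "r / h \<le> real K" by (simp add: K_def) linarith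
      then show ?thesis using h by (simp add: field_simps)
    qed
    ultimately show ?thesis using real by (meson ennreal_leI order_trans)
  next
    case top
    have "suminf ?f = \<top>"
    proof (rule ccontr)
      assume "suminf ?f \<noteq> \<top>"
      then obtain q where q: "suminf ?f = ennreal q" "q \<ge> 0" by (cases "suminf ?f") auto
      obtain K :: nat where "q / h < real K" using reals_Archimedean2 by blast
      then have "q < real K * h" using h by (simp add: field_simps)
      moreover have "ennreal (real K * h) \<le> ennreal q" using part[of K] top q by simp
      ultimately show False using q h by (simp add: ennreal_le_iff)
    qed
    then show ?thesis by simp
  qed
qed

lemma nn_integral_le_suminf_tail:
  assumes T: "T \<in> borel_measurable M" and h: "h > 0"
  shows "(\<integral>\<^sup>+\<omega>. T \<omega> \<partial>M) \<le> (\<Sum>N. ennreal h * emeasure M {\<omega>\<in>space M. ennreal (real N * h) < T \<omega>})"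
proof -
  have "(\<integral>\<^sup>+\<omega>. T \<omega> \<partial>M)
      \<le> (\<integral>\<^sup>+\<omega>. (\<Sum>N. ennreal h * indicator {\<omega>\<in>space M. ennreal (real N * h) < T \<omega>} \<omega>) \<partial>M)"
    by (rule nn_integral_mono) (use ennreal_le_suminf_of_bool_less[OF h] in \<open>simp add: indicator_def\<close>)
  also have "\<dots> = (\<Sum>N. \<integral>\<^sup>+\<omega>. ennreal h * indicator {\<omega>\<in>space M. ennreal (real N * h) < T \<omega>} \<omega> \<partial>M)"
    by (rule nn_integral_suminf) (use T in measurable)
  also have "\<dots> = (\<Sum>N. ennreal h * emeasure M {\<omega>\<in>space M. ennreal (real N * h) < T \<omega>})"
    by (intro suminf_cong nn_integral_cmult_indicator) (use T in measurable)
  finally show ?thesis .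
qed

lemma (in prob_space) nn_integral_finite_if_inverse_square_tail:
  assumes T: "T \<in> borel_measurable M" and h: "h > 0"
    and tail: "\<And>N. N \<ge> 1 \<Longrightarrow> emeasure M {\<omega>\<in>space M. ennreal (real N * h) < T \<omega>} \<le> ennreal (C / (real N)\<^sup>2)"
  shows "(\<integral>\<^sup>+\<omega>. T \<omega> \<partial>M) < \<infinity>"
proof -
  define C' where "C' = max 1 C"
  define b where "b N = 4 * C' * inverse (real (Suc N) ^ 2)" for N
  have "summable (\<lambda>N. inverse (real N ^ 2))" by (rule inverse_power_summable) simp
  then have "summable (\<lambda>N. inverse (real (Suc N) ^ 2))" by (subst summable_Suc_iff)
  then have b_summable: "summable (\<lambda>N. h * b N)" unfolding b_def by (intro summable_mult)
  have b0: "b N \<ge> 0" for N by (simp add: b_def C'_def)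
  have tail_b: "emeasure M {\<omega>\<in>space M. ennreal (real N * h) < T \<omega>} \<le> ennreal (b N)" for N
  proof (cases "N = 0")
    case True
    have "emeasure M {\<omega>\<in>space M. ennreal (real N * h) < T \<omega>} \<le> 1" by (rule emeasure_le_1)
    also have "1 \<le> ennreal (b N)" using True by (simp add: b_def C'_def)
    finally show ?thesis .
  next
    case False
    have C': "C' > 0" by (simp add: C'_def)
    have "C' * (real N + 1)\<^sup>2 \<le> C' * (2 * real N)\<^sup>2"
      using False C' by (intro mult_left_mono power_mono) auto
    then have "C' / (real N)\<^sup>2 \<le> b N"
      using False C' by (simp add: b_def field_simps power_mult_distrib)
    moreover have "C / (real N)\<^sup>2 \<le> C' / (real N)\<^sup>2" by (simp add: C'_def divide_right_mono)
    ultimately have "ennreal (C / (real N)\<^sup>2) \<le> ennreal (b N)" by (intro ennreal_leI) linarith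
    moreover have "N \<ge> 1" using False by simp
    ultimately show ?thesis using tail by (meson order_trans)
  qed
  have "(\<integral>\<^sup>+\<omega>. T \<omega> \<partial>M) \<le> (\<Sum>N. ennreal h * emeasure M {\<omega>\<in>space M. ennreal (real N * h) < T \<omega>})"
    by (rule nn_integral_le_suminf_tail[OF T h])
  also have "\<dots> \<le> (\<Sum>N. ennreal (h * b N))"
  proof (rule suminf_le)
    fix N
    show "ennreal h * emeasure M {\<omega>\<in>space M. ennreal (real N * h) < T \<omega>} \<le> ennreal (h * b N)"
      using mult_left_mono[OF tail_b[of N], of "ennreal h"] h b0 by (simp add: ennreal_mult)
  qed auto
  also have "\<dots> = ennreal (\<Sum>N. h * b N)"
    by (rule suminf_ennreal2) (use h b0 b_summable in auto)
  finally show ?thesis by (simp add: le_less_trans)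
qed

section \<open>The Langevin velocity\<close>

lemma wiener_block_event_le:
  assumes wp: "wiener_process M W" and a: "a \<noteq> 0" and h: "h > 0"
    and N: "N \<ge> 1" and n: "n \<ge> 1" and b: "b \<ge> 0"
  defines "\<tau> \<equiv> \<bar>a\<bar> * sqrt h"
  defines "L \<equiv> 1 + b + \<tau> * sqrt (6 * ln (real N + 2))"
  defines "C0 \<equiv> exp (- 3 * ((1 + b) / 6 + 2)\<^sup>2 / \<tau>\<^sup>2) / (\<tau> * sqrt (2*pi))"
  shows "emeasure M {\<omega>\<in>space M. (\<exists>k<N. block_noise (\<lambda>t. a * W t \<omega>) h n k > L - 1)
                               \<or> (\<forall>k<N. block_noise (\<lambda>t. a * W t \<omega>) h n k > - (L/6 + 1))}
         \<le> ennreal ((1 + 2304 / C0^4) / (real N)\<^sup>2)"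
proof -
  interpret prob_space M using wp by (simp add: wiener_process_def)
  have \<tau>: "\<tau> > 0" using a h by (simp add: \<tau>_def)
  have x: "real N \<ge> 1" using N by simp
  obtain \<sigma> where \<sigma>: "\<tau> / sqrt 3 \<le> \<sigma>" "\<sigma> \<le> \<tau>"
    and ind: "indep_vars (\<lambda>_. borel) (\<lambda>k \<omega>. block_noise (\<lambda>t. a * W t \<omega>) h n k) {..<N}"
    and dist: "\<And>k. k < N \<Longrightarrow> distributed M lborel (\<lambda>\<omega>. block_noise (\<lambda>t. a * W t \<omega>) h n k) (normal_density 0 \<sigma>)"
    using wiener_block_noise_normal[OF wp a h n] unfolding \<tau>_def by metis
  have "prob {\<omega>\<in>space M. (\<exists>k<N. block_noise (\<lambda>t. a * W t \<omega>) h n k > L - 1)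
                        \<or> (\<forall>k<N. block_noise (\<lambda>t. a * W t \<omega>) h n k > - (L/6 + 1))}
      \<le> real N * exp (- (L - 1)\<^sup>2 / (2 * \<tau>\<^sup>2))
         + exp (- real N * (exp (- (L/6 + 1 + 1)\<^sup>2 / (2 * (\<tau> / sqrt 3)\<^sup>2)) / (\<tau> * sqrt (2*pi))))"
    using \<tau> b by (intro prob_some_exceeds_or_none_drops_le[OF ind N dist _ \<sigma>]) (auto simp: L_def)
  also have "real N * exp (- (L - 1)\<^sup>2 / (2 * \<tau>\<^sup>2)) \<le> 1 / (real N)\<^sup>2"
    using \<tau> x b by (intro large_deviation_term_le) (auto simp: L_def)
  also have "L/6 + 1 + 1 = (1 + b) / 6 + 2 + \<tau> * sqrt (6 * ln (real N + 2)) / 6"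
    by (simp add: L_def field_simps)
  also have "exp (- real N * (exp (- ((1 + b) / 6 + 2 + \<tau> * sqrt (6 * ln (real N + 2)) / 6)\<^sup>2
                                     / (2 * (\<tau> / sqrt 3)\<^sup>2)) / (\<tau> * sqrt (2*pi))))
      \<le> 2304 / C0^4 / (real N)\<^sup>2"
    unfolding C0_def by (rule small_ball_term_le[OF \<tau> x])
  finally have "prob {\<omega>\<in>space M. (\<exists>k<N. block_noise (\<lambda>t. a * W t \<omega>) h n k > L - 1)
                                 \<or> (\<forall>k<N. block_noise (\<lambda>t. a * W t \<omega>) h n k > - (L/6 + 1))}
      \<le> (1 + 2304 / C0^4) / (real N)\<^sup>2"
    by (simp add: add_divide_distrib)
  then show ?thesis unfolding emeasure_eq_measure by (rule ennreal_leI)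
qed

lemma langevin_solution_normalized:
  assumes m: "m > 0" and ls: "langevin_solution M m \<gamma> \<sigma> v W V"
    and \<omega>: "\<omega> \<in> space M" and t: "t \<ge> 0"
  shows "V t \<omega> = v - \<gamma> / m * integral {0..t} (\<lambda>r. V r \<omega>) + \<sigma> / m * W t \<omega>"
proof -
  have "m * V t \<omega> = m * v - \<gamma> * integral {0..t} (\<lambda>r. V r \<omega>) + \<sigma> * W t \<omega>"
    using ls \<omega> t by (simp add: langevin_solution_def)
  then show ?thesis using m by (simp add: field_simps)
qed

lemma langevin_solution_at_0:
  assumes "m > 0" and "wiener_process M W" and "langevin_solution M m \<gamma> \<sigma> v W V" and "\<omega> \<in> space M"
  shows "V 0 \<omega> = v"
  using langevin_solution_normalized[OF assms(1,3,4), of 0] assms(2,4) by (simp add: wiener_process_def)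

lemma langevin_measurable:
  assumes m: "m > 0" and \<gamma>: "\<gamma> > 0" and wp: "wiener_process M W"
    and ls: "langevin_solution M m \<gamma> \<sigma> v W V" and t: "t \<ge> 0"
  shows "V t \<in> borel_measurable M"
proof -
  define c where "c = \<gamma> / m"
  define s where "s = \<sigma> / m"
  have c: "c > 0" using m \<gamma> by (simp add: c_def)
  have Wm: "\<And>t. t \<ge> 0 \<Longrightarrow> W t \<in> borel_measurable M" and Wc: "\<And>\<omega>. \<omega> \<in> space M \<Longrightarrow> continuous_on {0..} (\<lambda>t. W t \<omega>)"
    using wp by (simp_all add: wiener_process_def)
  have explicit: "V t \<omega> = s * W t \<omega> + exp (- c * t) * (v - c * integral {0..t} (\<lambda>r. exp (c * r) * (s * W r \<omega>)))"
    if \<omega>: "\<omega> \<in> space M" for \<omega>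
  proof (rule linear_integral_equation_explicit[OF c _ _ _ t])
    show "continuous_on {0..} (\<lambda>t. V t \<omega>)" using ls \<omega> by (simp add: langevin_solution_def)
    show "continuous_on {0..} (\<lambda>t. s * W t \<omega>)" using Wc[OF \<omega>] by (intro continuous_intros)
    show "V t \<omega> = v - c * integral {0..t} (\<lambda>r. V r \<omega>) + s * W t \<omega>" if "t \<ge> 0" for t
      using langevin_solution_normalized[OF m ls \<omega> that] by (simp add: c_def s_def)
  qed
  have "continuous_on {0..t} (\<lambda>r. W r \<omega>)" if "\<omega> \<in> space M" for \<omega>
    using continuous_on_subset[OF Wc[OF that]] by auto
  then have "(\<lambda>\<omega>. integral {0..t} (\<lambda>r. exp (c * r) * (s * W r \<omega>))) \<in> borel_measurable M"
    using Wm by (intro borel_measurable_path_integral) (auto intro!: continuous_intros)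
  then have "(\<lambda>\<omega>. s * W t \<omega> + exp (- c * t) * (v - c * integral {0..t} (\<lambda>r. exp (c * r) * (s * W r \<omega>))))
      \<in> borel_measurable M"
    using Wm[OF t] by measurable
  then show ?thesis by (subst measurable_cong[OF explicit]) auto
qed

lemma langevin_sgn_pos_before_first_zero_time:
  assumes m: "m > 0" and wp: "wiener_process M W" and ls: "langevin_solution M m \<gamma> \<sigma> v W V"
    and v: "v \<noteq> 0" and \<omega>: "\<omega> \<in> space M"
    and surv: "ennreal Z < first_zero_time V \<omega>" and r: "r \<in> {0..Z}"
  shows "sgn v * V r \<omega> > 0"
proof -
  have V0: "V 0 \<omega> = v" by (rule langevin_solution_at_0[OF m wp ls \<omega>])
  have "continuous_on {0..} (\<lambda>t. V t \<omega>)" using ls \<omega> by (simp add: langevin_solution_def)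
  then have "V 0 \<omega> * V r \<omega> > 0"
    using r surv V0 v by (intro mult_pos_before_first_zero_time) (auto intro: continuous_on_subset)
  then show ?thesis using V0 by (auto simp: sgn_if zero_less_mult_iff)
qed

lemma langevin_survival_block_dichotomy:
  assumes m: "m > 0" and \<gamma>: "\<gamma> > 0" and wp: "wiener_process M W"
    and ls: "langevin_solution M m \<gamma> \<sigma> v W V" and v: "v \<noteq> 0" and \<omega>: "\<omega> \<in> space M"
    and h: "\<gamma> / m * h = 11" and surv: "ennreal (real N * h) < first_zero_time V \<omega>"
    and L: "\<bar>v\<bar> \<le> L"
  shows "\<forall>\<^sub>F n in sequentially.
           (\<exists>k<N. block_noise (\<lambda>t. sgn v * (\<sigma> / m) * W t \<omega>) h n k > L - 1)
         \<or> (\<forall>k<N. block_noise (\<lambda>t. sgn v * (\<sigma> / m) * W t \<omega>) h n k > - (L/6) - 1)"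
proof -
  have c: "\<gamma> / m > 0" using m \<gamma> by simp
  then have "h > 0" using h zero_less_mult_pos[of "\<gamma> / m" h] by simp
  have Vc: "continuous_on {0..} (\<lambda>t. V t \<omega>)" using ls \<omega> by (simp add: langevin_solution_def)
  have Wc: "continuous_on {0..} (\<lambda>t. W t \<omega>)" using wp \<omega> by (simp add: wiener_process_def)
  have pos: "sgn v * V r \<omega> > 0" if "r \<in> {0..real N * h}" for r
    by (rule langevin_sgn_pos_before_first_zero_time[OF m wp ls v \<omega> surv that])
  have "\<forall>\<^sub>F n in sequentially. \<forall>k<N. sgn v * V (real (Suc k) * h) \<omega>
          \<le> sgn v * V (real k * h) \<omega> / 12 + block_noise (\<lambda>t. sgn v * (\<sigma> / m) * W t \<omega>) h n k + 1"
  proof (rule integral_equation_discrete_steps[OF c h _ _ _ pos])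
    show "continuous_on {0..} (\<lambda>t. sgn v * V t \<omega>)" "continuous_on {0..} (\<lambda>t. sgn v * (\<sigma> / m) * W t \<omega>)"
      using Vc Wc m by (auto intro!: continuous_intros)
    show "sgn v * V t \<omega> = \<bar>v\<bar> - \<gamma> / m * integral {0..t} (\<lambda>t. sgn v * V t \<omega>) + sgn v * (\<sigma> / m) * W t \<omega>"
      if "t \<ge> 0" for t
    proof -
      have "sgn v * V t \<omega> = sgn v * (v - \<gamma> / m * integral {0..t} (\<lambda>r. V r \<omega>) + \<sigma> / m * W t \<omega>)"
        using langevin_solution_normalized[OF m ls \<omega> that] by simp
      then show ?thesis by (simp add: algebra_simps abs_sgn)
    qed
  qed
  then show ?thesis
  proof (rule eventually_mono)
    fix n
    assume "\<forall>k<N. sgn v * V (real (Suc k) * h) \<omega>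
              \<le> sgn v * V (real k * h) \<omega> / 12 + block_noise (\<lambda>t. sgn v * (\<sigma> / m) * W t \<omega>) h n k + 1"
    moreover have "sgn v * V (real 0 * h) \<omega> \<le> L"
      using langevin_solution_at_0[OF m wp ls \<omega>] L by (simp add: abs_sgn mult.commute)
    moreover have "sgn v * V (real k * h) \<omega> > 0" if "k \<le> N" for k
      using \<open>h > 0\<close> that by (intro pos) (auto intro: mult_right_mono)
    ultimately show "(\<exists>k<N. block_noise (\<lambda>t. sgn v * (\<sigma> / m) * W t \<omega>) h n k > L - 1)
      \<or> (\<forall>k<N. block_noise (\<lambda>t. sgn v * (\<sigma> / m) * W t \<omega>) h n k > - (L/6) - 1)"
      by (intro positive_recursion_dichotomy[where U="\<lambda>k. sgn v * V (real k * h) \<omega>"]) auto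
  qed
qed

lemma langevin_first_zero_time_tail:
  fixes M :: "'a measure" and W V :: "real \<Rightarrow> 'a \<Rightarrow> real"
  assumes m: "m > 0" and \<gamma>: "\<gamma> > 0" and \<sigma>: "\<sigma> > 0" and wp: "wiener_process M W"
    and ls: "langevin_solution M m \<gamma> \<sigma> v W V" and v: "v \<noteq> 0"
  obtains C h where "h > 0"
    and "\<And>N. N \<ge> 1 \<Longrightarrow> emeasure M {\<omega>\<in>space M. ennreal (real N * h) < first_zero_time V \<omega>}
                           \<le> ennreal (C / (real N)\<^sup>2)"
proof -
  define h where "h = 11 * m / \<gamma>"
  have h: "h > 0" and ch: "\<gamma> / m * h = 11" using m \<gamma> by (simp_all add: h_def)
  define a where "a = sgn v * (\<sigma> / m)"
  have a: "a \<noteq> 0" using v m \<sigma> by (simp add: a_def sgn_if)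
  have Wm: "\<And>t. t \<ge> 0 \<Longrightarrow> W t \<in> borel_measurable M" using wp by (simp add: wiener_process_def)
  define \<tau> where "\<tau> = \<bar>a\<bar> * sqrt h"
  define C0 where "C0 = exp (- 3 * ((1 + \<bar>v\<bar>) / 6 + 2)\<^sup>2 / \<tau>\<^sup>2) / (\<tau> * sqrt (2*pi))"
  show ?thesis
  proof (rule that[OF h])
    fix N :: nat assume N: "N \<ge> 1"
    define L where "L = 1 + \<bar>v\<bar> + \<tau> * sqrt (6 * ln (real N + 2))"
    define E where "E n = {\<omega>\<in>space M. (\<exists>k<N. block_noise (\<lambda>t. a * W t \<omega>) h n k > L - 1)
                               \<or> (\<forall>k<N. block_noise (\<lambda>t. a * W t \<omega>) h n k > - (L/6 + 1))}" for n
    have [measurable]: "(\<lambda>\<omega>. block_noise (\<lambda>t. a * W t \<omega>) h n k) \<in> borel_measurable M" for n k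
      using h by (auto simp: block_noise_def intro!: borel_measurable_sum borel_measurable_times
          borel_measurable_diff borel_measurable_const Wm)
    have "E n \<in> sets M" for n unfolding E_def by measurable
    moreover have "\<forall>\<^sub>F n in sequentially. \<omega> \<in> E n"
      if "\<omega> \<in> {\<omega>\<in>space M. ennreal (real N * h) < first_zero_time V \<omega>}" for \<omega>
    proof -
      have \<omega>: "\<omega> \<in> space M" and surv: "ennreal (real N * h) < first_zero_time V \<omega>" using that by auto
      have "0 \<le> \<tau> * sqrt (6 * ln (real N + 2))" using h by (simp add: \<tau>_def)
      then have "\<bar>v\<bar> \<le> L" by (simp add: L_def)
      from langevin_survival_block_dichotomy[OF m \<gamma> wp ls v \<omega> ch surv this]
      show ?thesis by (rule eventually_mono) (auto simp: E_def a_def \<omega>)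
    qed
    moreover have "emeasure M (E n) \<le> ennreal ((1 + 2304 / C0^4) / (real N)\<^sup>2)" if "n \<ge> 1" for n
      using wiener_block_event_le[OF wp a h N that, where b="\<bar>v\<bar>"]
      by (simp add: E_def L_def C0_def \<tau>_def)
    then have "\<forall>\<^sub>F n in sequentially. emeasure M (E n) \<le> ennreal ((1 + 2304 / C0^4) / (real N)\<^sup>2)"
      by (auto simp: eventually_sequentially)
    ultimately show "emeasure M {\<omega>\<in>space M. ennreal (real N * h) < first_zero_time V \<omega>}
                       \<le> ennreal ((1 + 2304 / C0^4) / (real N)\<^sup>2)"
      by (rule emeasure_le_if_eventually_mem)
  qed
qed

theorem corollary4p2:
  fixes M :: "'a measure" and W V :: "real \<Rightarrow> 'a \<Rightarrow> real" and m \<gamma> \<sigma> v :: real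
  assumes "m > 0" and "\<gamma> > 0" and "\<sigma> > 0"
    and "wiener_process M W"
    and "langevin_solution M m \<gamma> \<sigma> v W V"
    and "1/2 * m * v\<^sup>2 > 0"
  defines "K \<equiv> (\<lambda>t \<omega>. 1/2 * m * (V t \<omega>)\<^sup>2)"
  shows "first_zero_time K \<in> borel_measurable M
    \<and> (\<integral>\<^sup>+ \<omega>. first_zero_time K \<omega> \<partial>M) < \<infinity>
    \<and> (AE \<omega> in M. \<exists>t>0. K t \<omega> = 0)"
proof -
  interpret prob_space M using assms(4) by (simp add: wiener_process_def)
  have v: "v \<noteq> 0" using assms(6) by auto
  have KV: "K t \<omega> = 0 \<longleftrightarrow> V t \<omega> = 0" for t \<omega> using assms(1) by (simp add: K_def)
  then have T_eq: "first_zero_time K = first_zero_time V" by (simp add: fun_eq_iff first_zero_time_def)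
  have Tm: "first_zero_time V \<in> borel_measurable M"
    using langevin_measurable[OF assms(1,2,4,5)] langevin_solution_at_0[OF assms(1,4,5)] v assms(5)
    by (intro borel_measurable_first_zero_time) (auto simp: langevin_solution_def)
  obtain C h where "h > 0" and "\<And>N. N \<ge> 1 \<Longrightarrow>
      emeasure M {\<omega>\<in>space M. ennreal (real N * h) < first_zero_time V \<omega>} \<le> ennreal (C / (real N)\<^sup>2)"
    using langevin_first_zero_time_tail[OF assms(1-5) v] by metis
  then have fin: "(\<integral>\<^sup>+ \<omega>. first_zero_time V \<omega> \<partial>M) < \<infinity>"
    by (intro nn_integral_finite_if_inverse_square_tail[OF Tm])
  have "AE \<omega> in M. first_zero_time V \<omega> \<noteq> \<infinity>"
    using nn_integral_PInf_AE[OF Tm] fin by simp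
  then have "AE \<omega> in M. \<exists>t>0. K t \<omega> = 0"
    by eventually_elim (auto simp: first_zero_time_def KV)
  with Tm fin show ?thesis by (simp add: T_eq)
qed

end
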